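(* Let $q\in(1,+\infty)$, $T>0$ and $p=q/(q-1)$. For $(t,x,v)\in[0,T]\times[-1,1]\times\mathbb R$ let $$\tilde\phi(t,x,v)=\inf\frac1q\int_t^T|\xi''(s)|^q\,ds,$$ where the infimum is taken over all $\xi\in W^{2,q}(t,T)$ such that $\xi(t)=x$, $\xi'(t)=v$ and $\xi(s)\in[-1,1]$ for all $s\in[t,T]$. Then $$\tilde\phi(t,x,v)=\begin{cases} \frac{q^{q-1}}{(2q-1)^q}\frac{|v|^{2q-1}}{(1+x)^{q-1}}, & \text{if } v(T-t)\le -\frac{2q-1}{q-1}(1+x)<0,\\[2mm] \frac1q\frac{(2q-1)^{q-1}}{(q-1)^{q-1}}\frac{\left|v+\frac{1+x}{T-t}\right|^q}{(T-t)^{q-1}}, & \text{if } -\frac{2q-1}{q-1}(1+x)\le v(T-t)\le -(1+x),\\[2mm] 0, & \text{if } -1-x\le v(T-t)\le 1-x,\\[2mm] \frac1q\frac{(2q-1)^{q-1}}{(q-1)^{q-1}}\frac{\left(v+\frac{x-1}{T-t}\right)^q}{(T-t)^{q-1}}, & \text{if } 1-x\le v(T-t)\le\frac{2q-1}{q-1}(1-x),\\[2mm] \frac{q^{q-1}}{(2q-1)^q}\frac{v^{2q-1}}{(1-x)^{q-1}}, & \text{if } v(T-t)\ge\frac{2q-1}{q-1}(1-x)>0, \end{cases}$$ and $\tilde\phi$ is $C^1$ in $[0,T]\times(-1,1)\times\mathbb R$. Moreover, the restrictions of $\tilde\phi$ to $[0,T)\times[-1,1)\times[0,+\infty)$ and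 to $[0,T)\times(-1,1]\times(-\infty,0]$ are pointwise solutions of $$-\frac{\partial\tilde\phi}{\partial t}-v\frac{\partial\tilde\phi}{\partial x}+\frac1p\left|\frac{\partial\tilde\phi}{\partial v}\right|^p=0.$$ *)

theory Defs
  imports "HOL-Analysis.Analysis"
begin

text \<open>One-dimensional Sobolev space W^{2,q}(t,T): xi is differentiable on [t,T] with
  derivative xi', and xi' is absolutely continuous with (weak) derivative g in L^q(t,T),
  i.e. xi'(s) = xi'(t) + integral of g over [t,s].\<close>
definition W2q :: "real \<Rightarrow> real \<Rightarrow> real \<Rightarrow> (real \<Rightarrow> real) \<Rightarrow> (real \<Rightarrow> real) \<Rightarrow> (real \<Rightarrow> real) \<Rightarrow> bool" where
  "W2q q t T xi xi' g \<longleftrightarrow>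
     (\<forall>s\<in>{t..T}. (xi has_real_derivative xi' s) (at s within {t..T})) \<and>
     g absolutely_integrable_on {t..T} \<and>
     (\<lambda>s. \<bar>g s\<bar> powr q) integrable_on {t..T} \<and>
     (\<forall>s\<in>{t..T}. xi' s = xi' t + integral {t..s} g)"

definition admissible :: "real \<Rightarrow> real \<Rightarrow> real \<Rightarrow> real \<Rightarrow> real \<Rightarrow> (real \<Rightarrow> real) \<Rightarrow> (real \<Rightarrow> real) \<Rightarrow> (real \<Rightarrow> real) \<Rightarrow> bool" where
  "admissible q T t x v xi xi' g \<longleftrightarrow>
     W2q q t T xi xi' g \<and> xi t = x \<and> xi' t = v \<and> (\<forall>s\<in>{t..T}. xi s \<in> {-1..1})"

text \<open>Value function (infimum in the extended reals; +infinity if no admissible curve).\<close>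
definition phi_tilde :: "real \<Rightarrow> real \<Rightarrow> real \<Rightarrow> real \<Rightarrow> real \<Rightarrow> ereal" where
  "phi_tilde q T t x v =
     (INF c \<in> {(xi, xi', g). admissible q T t x v xi xi' g}.
        ereal ((1/q) * integral {t..T} (\<lambda>s. \<bar>(snd (snd c)) s\<bar> powr q)))"

end

theory Submission
  imports Defs
begin

(* By the symmetry (x, v) -> (-x, -v) it suffices to treat v >= 0, where only the obstacle 1
   matters. If the free motion x + v (s - t) stays in [-1, 1] the value is 0. Otherwise the Taylor
   formula xi(sigma) = x + v (sigma - t) + int_t^sigma (sigma - r) xi''(r) dr together with
   xi(sigma) <= 1, tested with the weight beta (sigma - r) and estimated by Young's inequality,
   bounds the cost from below for every sigma in (t, T]. The braking curve with
   xi'' = -c (sigma - r)_+^(p-1) attains one of these bounds: it touches the obstacle either at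
   time T or, for large v, with zero velocity at some sigma < T. The resulting value is
   self-similar, (1 - x)^q (T - t)^(1-2q) psi(v (T - t) / (1 - x)), where the profile psi is C^1
   and solves an ODE that is exactly the Hamilton-Jacobi equation. The value for v >= 0 and its
   reflection add up to a function that is C^1 for t < T and vanishes identically near t = T. *)

section \<open>Taylor formula for curves in \<open>W2q\<close>\<close>

lemma absolutely_integrable_continuous_mult:
  fixes g w :: "real \<Rightarrow> real"
  assumes g: "g absolutely_integrable_on {l..u}" and w: "continuous_on {l..u} w"
  shows "(\<lambda>r. w r * g r) absolutely_integrable_on {l..u}"
proof (rule absolutely_integrable_bounded_measurable_product_real)
  show "w \<in> borel_measurable (lebesgue_on {l..u})"
    by (rule continuous_imp_measurable_on_sets_lebesgue[OF w]) auto
  show "bounded (w ` {l..u})"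
    by (rule compact_imp_bounded[OF compact_continuous_image[OF w]]) auto
qed (use g in auto)

lemma abs_integral_mult_le:
  fixes g w :: "real \<Rightarrow> real"
  assumes g: "g absolutely_integrable_on {l..u}" and w: "continuous_on {l..u} w"
    and bound: "\<And>r. r \<in> {l..u} \<Longrightarrow> \<bar>w r\<bar> \<le> M"
  shows "\<bar>integral {l..u} (\<lambda>r. w r * g r)\<bar> \<le> M * integral {l..u} (\<lambda>r. \<bar>g r\<bar>)"
proof -
  have "norm (integral {l..u} (\<lambda>r. w r * g r)) \<le> integral {l..u} (\<lambda>r. M * \<bar>g r\<bar>)"
  proof (rule integral_norm_bound_integral)
    show "(\<lambda>r. w r * g r) integrable_on {l..u}"
      using absolutely_integrable_continuous_mult[OF g w] by (rule set_lebesgue_integral_eq_integral)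
    show "(\<lambda>r. M * \<bar>g r\<bar>) integrable_on {l..u}"
      using g by (intro integrable_on_mult_right) (simp add: absolutely_integrable_on_def)
  qed (auto simp: abs_mult intro!: mult_right_mono bound)
  then show ?thesis by simp
qed

lemma integrable_on_moment:
  fixes g :: "real \<Rightarrow> real"
  assumes "g absolutely_integrable_on {a..b}" and "{l..u} \<subseteq> {a..b}"
  shows "(\<lambda>r. (c - r) * g r) integrable_on {l..u}"
proof -
  have "(\<lambda>r. (c - r) * g r) absolutely_integrable_on {l..u}"
    using assms by (intro absolutely_integrable_continuous_mult absolutely_integrable_on_subinterval
        continuous_intros)
  then show ?thesis by (rule set_lebesgue_integral_eq_integral)
qed

lemma integral_weight_increment_le:
  fixes g :: "real \<Rightarrow> real"
  assumes g: "g absolutely_integrable_on {a..b}" and y: "y \<in> {a..b}" and y0: "y0 \<in> {a..b}"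
  shows "\<bar>integral {a..y} (\<lambda>r. (c - r) * g r) - integral {a..y0} (\<lambda>r. (c - r) * g r)\<bar>
         \<le> (\<bar>y - y0\<bar> + \<bar>c - y0\<bar>)
            * \<bar>integral {a..y} (\<lambda>r. \<bar>g r\<bar>) - integral {a..y0} (\<lambda>r. \<bar>g r\<bar>)\<bar>"
proof -
  define K where "K z = integral {a..z} (\<lambda>r. (c - r) * g r)" for z
  define A where "A z = integral {a..z} (\<lambda>r. \<bar>g r\<bar>)" for z
  define l u where "l = min y y0" and "u = max y y0"
  have lu: "a \<le> l" "l \<le> u" "u \<le> b" using y y0 by (auto simp: l_def u_def)
  then have sub: "{a..u} \<subseteq> {a..b}" "{l..u} \<subseteq> {a..b}" by auto
  have g_lu: "g absolutely_integrable_on {l..u}" and abs_int: "(\<lambda>r. \<bar>g r\<bar>) integrable_on {a..u}"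
    using absolutely_integrable_on_subinterval[OF g sub(2)] absolutely_integrable_on_subinterval[OF g sub(1)]
    by (auto simp: absolutely_integrable_on_def)
  have "K l + integral {l..u} (\<lambda>r. (c - r) * g r) = K u"
    unfolding K_def
    by (rule Henstock_Kurzweil_Integration.integral_combine[OF lu(1,2) integrable_on_moment[OF g sub(1)]])
  moreover have "A l + integral {l..u} (\<lambda>r. \<bar>g r\<bar>) = A u"
    unfolding A_def by (rule Henstock_Kurzweil_Integration.integral_combine[OF lu(1,2) abs_int])
  moreover have "\<bar>integral {l..u} (\<lambda>r. (c - r) * g r)\<bar>
      \<le> (\<bar>y - y0\<bar> + \<bar>c - y0\<bar>) * integral {l..u} (\<lambda>r. \<bar>g r\<bar>)"
    by (intro abs_integral_mult_le g_lu) (auto simp: l_def u_def intro!: continuous_intros)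
  moreover have "integral {l..u} (\<lambda>r. \<bar>g r\<bar>) \<ge> 0"
    using g_lu by (simp add: integral_nonneg absolutely_integrable_on_def)
  ultimately have "\<bar>K u - K l\<bar> \<le> (\<bar>y - y0\<bar> + \<bar>c - y0\<bar>) * \<bar>A u - A l\<bar>"
    by (metis abs_of_nonneg add_diff_cancel_left')
  moreover have "\<bar>K y - K y0\<bar> = \<bar>K u - K l\<bar>" "\<bar>A y - A y0\<bar> = \<bar>A u - A l\<bar>"
    by (auto simp: l_def u_def min_def max_def abs_minus_commute)
  ultimately show ?thesis
    by (simp add: K_def A_def)
qed

lemma integral_moment_increment_le:
  fixes g :: "real \<Rightarrow> real"
  assumes g: "g absolutely_integrable_on {a..b}" and y: "y \<in> {a..b}" and y0: "y0 \<in> {a..b}"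
  shows "\<bar>integral {a..y} (\<lambda>r. (y - r) * g r) - integral {a..y0} (\<lambda>r. (y0 - r) * g r)
            - (y - y0) * integral {a..y0} g\<bar>
         \<le> \<bar>y - y0\<bar> * (\<bar>integral {a..y} g - integral {a..y0} g\<bar>
            + \<bar>integral {a..y} (\<lambda>r. \<bar>g r\<bar>) - integral {a..y0} (\<lambda>r. \<bar>g r\<bar>)\<bar>)"
proof -
  define G where "G z = integral {a..z} g" for z
  define A where "A z = integral {a..z} (\<lambda>r. \<bar>g r\<bar>)" for z
  define K where "K z = integral {a..z} (\<lambda>r. (y0 - r) * g r)" for z
  have split: "integral {a..z} (\<lambda>r. (z - r) * g r) = K z + (z - y0) * G z" if "z \<in> {a..b}" for z
  proof -
    have g_az: "g integrable_on {a..z}"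
      using that absolutely_integrable_on_subinterval[OF g, of a z] by (auto simp: absolutely_integrable_on_def)
    have w_az: "(\<lambda>r. (y0 - r) * g r) integrable_on {a..z}"
      using that by (intro integrable_on_moment[OF g]) auto
    have "integral {a..z} (\<lambda>r. (z - r) * g r) = integral {a..z} (\<lambda>r. (y0 - r) * g r + (z - y0) * g r)"
      by (rule integral_cong) (simp add: algebra_simps)
    also have "\<dots> = K z + (z - y0) * G z"
      using integral_add[OF w_az integrable_on_mult_right[OF g_az, of "z - y0"]]
      by (simp add: K_def G_def)
    finally show ?thesis .
  qed
  have "integral {a..y} (\<lambda>r. (y - r) * g r) - integral {a..y0} (\<lambda>r. (y0 - r) * g r) - (y - y0) * G y0
      = (K y - K y0) + (y - y0) * (G y - G y0)"
    using split[OF y] split[OF y0] by (simp add: algebra_simps)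
  also have "\<bar>\<dots>\<bar> \<le> \<bar>K y - K y0\<bar> + \<bar>y - y0\<bar> * \<bar>G y - G y0\<bar>"
    by (metis abs_mult abs_triangle_ineq)
  also have "\<dots> \<le> \<bar>y - y0\<bar> * (\<bar>G y - G y0\<bar> + \<bar>A y - A y0\<bar>)"
    using integral_weight_increment_le[OF g y y0, of y0] by (simp add: K_def A_def distrib_left)
  finally show ?thesis
    by (simp add: G_def A_def)
qed

lemma has_real_derivative_integral_moment:
  fixes g :: "real \<Rightarrow> real"
  assumes g: "g absolutely_integrable_on {a..b}" and y0: "y0 \<in> {a..b}"
  shows "((\<lambda>y. integral {a..y} (\<lambda>r. (y - r) * g r)) has_real_derivative integral {a..y0} g)
           (at y0 within {a..b})"
proof -
  define G where "G y = integral {a..y} g" for y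
  define A where "A y = integral {a..y} (\<lambda>r. \<bar>g r\<bar>)" for y
  define R where "R y = integral {a..y} (\<lambda>r. (y - r) * g r)" for y
  have "((\<lambda>y. (R y - R y0) / (y - y0) - G y0) \<longlongrightarrow> 0) (at y0 within {a..b})"
  proof (rule Lim_null_comparison)
    show "\<forall>\<^sub>F y in at y0 within {a..b}.
        norm ((R y - R y0) / (y - y0) - G y0) \<le> \<bar>G y - G y0\<bar> + \<bar>A y - A y0\<bar>"
      unfolding eventually_at_filter
    proof (intro always_eventually allI impI)
      fix y assume "y \<noteq> y0" "y \<in> {a..b}"
      then show "norm ((R y - R y0) / (y - y0) - G y0) \<le> \<bar>G y - G y0\<bar> + \<bar>A y - A y0\<bar>"
        using integral_moment_increment_le[OF g _ y0, of y]
        by (simp add: R_def G_def A_def divide_simps abs_divide mult.commute split: if_splits)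
    qed
    have "g integrable_on {a..b}" "(\<lambda>r. \<bar>g r\<bar>) integrable_on {a..b}"
      using g by (auto simp: absolutely_integrable_on_def)
    then have "continuous_on {a..b} G" "continuous_on {a..b} A"
      unfolding G_def A_def by (auto intro: indefinite_integral_continuous_1)
    then have "(G \<longlongrightarrow> G y0) (at y0 within {a..b})" "(A \<longlongrightarrow> A y0) (at y0 within {a..b})"
      using y0 by (auto simp: continuous_on_def)
    then show "((\<lambda>y. \<bar>G y - G y0\<bar> + \<bar>A y - A y0\<bar>) \<longlongrightarrow> 0) (at y0 within {a..b})"
      by (auto intro!: tendsto_eq_intros)
  qed
  then show ?thesis
    by (simp add: has_field_derivative_iff Lim_null[symmetric] R_def G_def)
qed

lemma W2q_taylor:
  assumes W: "W2q q t T xi xi' g" and \<sigma>: "t \<le> \<sigma>" "\<sigma> \<le> T"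
  shows "xi \<sigma> = xi t + xi' t * (\<sigma> - t) + integral {t..\<sigma>} (\<lambda>r. (\<sigma> - r) * g r)"
proof -
  have der: "\<And>s. s \<in> {t..T} \<Longrightarrow> (xi has_real_derivative xi' s) (at s within {t..T})"
    and g: "g absolutely_integrable_on {t..T}"
    and xi': "\<And>s. s \<in> {t..T} \<Longrightarrow> xi' s = xi' t + integral {t..s} g"
    using W unfolding W2q_def by blast+
  define F where "F y = xi y - xi t - xi' t * (y - t) - integral {t..y} (\<lambda>r. (y - r) * g r)" for y
  have "(F has_real_derivative 0) (at y within {t..T})" if y: "y \<in> {t..T}" for y
  proof -
    have "(F has_real_derivative xi' y - xi' t * 1 - integral {t..y} g) (at y within {t..T})"
      unfolding F_def
      by (rule derivative_eq_intros der[OF y] has_real_derivative_integral_moment[OF g y] | simp)+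
    then show ?thesis using xi'[OF y] by simp
  qed
  then obtain c where "\<forall>y\<in>{t..T}. F y = c"
    using has_field_derivative_zero_constant[of "{t..T}" F] by auto
  moreover have "F t = 0" by (simp add: F_def)
  ultimately have "F \<sigma> = 0" using \<sigma> by auto
  then show ?thesis by (simp add: F_def)
qed

section \<open>Truncated powers\<close>

definition trunc_powr :: "real \<Rightarrow> real \<Rightarrow> real" where
  "trunc_powr e y = max y 0 powr e"

lemma trunc_powr_nonneg: "trunc_powr e y \<ge> 0"
  by (simp add: trunc_powr_def)

lemma trunc_powr_eq_0: "y \<le> 0 \<Longrightarrow> trunc_powr e y = 0"
  by (simp add: trunc_powr_def)

lemma trunc_powr_eq_powr: "y \<ge> 0 \<Longrightarrow> trunc_powr e y = y powr e"
  by (simp add: trunc_powr_def)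

lemma has_real_derivative_trunc_powr:
  assumes e: "e > 1"
  shows "(trunc_powr e has_real_derivative e * trunc_powr (e - 1) y) (at y)"
proof -
  consider "y > 0" | "y < 0" | "y = 0" by linarith
  then show ?thesis
  proof cases
    case 1
    have "\<forall>\<^sub>F z in nhds y. trunc_powr e z = z powr e"
      using eventually_nhds_in_open[of "{0<..}" y] 1 by (auto elim!: eventually_mono simp: trunc_powr_def)
    moreover have "((\<lambda>z. z powr e) has_real_derivative e * y powr (e - 1)) (at y)"
      using 1 by (auto intro!: derivative_eq_intros)
    ultimately show ?thesis
      using 1 by (subst DERIV_cong_ev[OF refl _ refl]) (auto simp: trunc_powr_eq_powr)
  next
    case 2
    have "\<forall>\<^sub>F z in nhds y. trunc_powr e z = 0"
      using eventually_nhds_in_open[of "{..<0}" y] 2 by (auto elim!: eventually_mono simp: trunc_powr_def)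
    then show ?thesis
      using 2 by (subst DERIV_cong_ev[OF refl _ refl]) (auto simp: trunc_powr_eq_0)
  next
    case 3
    have "((\<lambda>z. trunc_powr e z / z) \<longlongrightarrow> 0) (at 0)"
    proof (rule Lim_null_comparison)
      show "\<forall>\<^sub>F z in at 0. norm (trunc_powr e z / z) \<le> \<bar>z\<bar> powr (e - 1)"
      proof (intro always_eventually allI)
        fix z :: real
        show "norm (trunc_powr e z / z) \<le> \<bar>z\<bar> powr (e - 1)"
        proof (cases "z > 0")
          case False
          then have "trunc_powr e z = 0" by (simp add: trunc_powr_eq_0)
          then show ?thesis by simp
        qed (simp add: trunc_powr_eq_powr powr_diff)
      qed
      show "((\<lambda>z. \<bar>z\<bar> powr (e - 1)) \<longlongrightarrow> 0) (at (0::real))"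
        using e by (intro tendsto_zero_powrI tendsto_eq_intros) auto
    qed
    then show ?thesis
      using 3 e by (simp add: has_field_derivative_iff trunc_powr_def)
  qed
qed

lemma DERIV_trunc_powr [derivative_intros]:
  assumes "e > 1" "(f has_real_derivative f') (at y within S)"
  shows "((\<lambda>y. trunc_powr e (f y)) has_real_derivative e * trunc_powr (e - 1) (f y) * f') (at y within S)"
  using DERIV_chain2[OF has_real_derivative_trunc_powr assms(2)] assms(1) by simp

lemma continuous_on_trunc_powr [continuous_intros]:
  assumes "e > 0" "continuous_on S f"
  shows "continuous_on S (\<lambda>y. trunc_powr e (f y))"
  unfolding trunc_powr_def
  by (rule continuous_on_powr') (use assms in \<open>auto intro!: continuous_intros\<close>)

lemma has_integral_trunc_powr:
  assumes e: "e > 0" and ab: "a \<le> b"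
  shows "((\<lambda>u. trunc_powr e (\<sigma> - u)) has_integral
           (trunc_powr (e + 1) (\<sigma> - a) - trunc_powr (e + 1) (\<sigma> - b)) / (e + 1)) {a..b}"
proof -
  have "((\<lambda>u. - trunc_powr (e + 1) (\<sigma> - u) / (e + 1)) has_real_derivative trunc_powr e (\<sigma> - u))
          (at u within {a..b})" for u
    using e by (auto intro!: derivative_eq_intros)
  then have "((\<lambda>u. trunc_powr e (\<sigma> - u)) has_integral
      (- trunc_powr (e + 1) (\<sigma> - b) / (e + 1) - - trunc_powr (e + 1) (\<sigma> - a) / (e + 1))) {a..b}"
    using ab by (intro fundamental_theorem_of_calculus)
      (auto simp: has_real_derivative_iff_has_vector_derivative[symmetric])
  then show ?thesis by (simp add: diff_divide_distrib)
qed

section \<open>Lower bounds and optimal braking curves\<close>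

lemma admissible_uminus:
  assumes "admissible q T t x v xi xi' g"
  shows "admissible q T t (-x) (-v) (\<lambda>r. - xi r) (\<lambda>r. - xi' r) (\<lambda>r. - g r)"
proof -
  have der: "\<And>s. s \<in> {t..T} \<Longrightarrow> (xi has_real_derivative xi' s) (at s within {t..T})"
    and g: "g absolutely_integrable_on {t..T}" "(\<lambda>s. \<bar>g s\<bar> powr q) integrable_on {t..T}"
    and xi': "\<And>s. s \<in> {t..T} \<Longrightarrow> xi' s = xi' t + integral {t..s} g"
    and init: "xi t = x" "xi' t = v" and box: "\<And>s. s \<in> {t..T} \<Longrightarrow> xi s \<in> {-1..1}"
    using assms unfolding admissible_def W2q_def by blast+
  have "W2q q t T (\<lambda>r. - xi r) (\<lambda>r. - xi' r) (\<lambda>r. - g r)"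
    unfolding W2q_def
  proof (intro conjI ballI)
    fix s assume s: "s \<in> {t..T}"
    show "((\<lambda>r. - xi r) has_real_derivative - xi' s) (at s within {t..T})"
      using der[OF s] by (rule DERIV_minus)
    show "- xi' s = - xi' t + integral {t..s} (\<lambda>r. - g r)"
      using xi'[OF s] by (simp add: integral_neg)
  qed (use g in \<open>simp_all add: absolutely_integrable_on_def integrable_neg\<close>)
  then show ?thesis
    using init box unfolding admissible_def by simp
qed

lemma phi_tilde_uminus: "phi_tilde q T t (-x) (-v) = phi_tilde q T t x v"
proof -
  have le: "phi_tilde q T t (-x) (-v) \<le> phi_tilde q T t x v" for x v
    unfolding phi_tilde_def
  proof (rule INF_greatest)
    fix c assume "c \<in> {(xi, xi', g). admissible q T t x v xi xi' g}"
    then obtain xi xi' g where c: "c = (xi, xi', g)" and adm: "admissible q T t x v xi xi' g"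
      by auto
    have "(\<lambda>r. - xi r, \<lambda>r. - xi' r, \<lambda>r. - g r) \<in> {(xi, xi', g). admissible q T t (-x) (-v) xi xi' g}"
      using admissible_uminus[OF adm] by simp
    then show "(INF c\<in>{(xi, xi', g). admissible q T t (-x) (-v) xi xi' g}.
                 ereal ((1/q) * integral {t..T} (\<lambda>s. \<bar>snd (snd c) s\<bar> powr q)))
               \<le> ereal ((1/q) * integral {t..T} (\<lambda>s. \<bar>snd (snd c) s\<bar> powr q))"
      by (rule INF_lower2) (simp add: c)
  qed
  show ?thesis
    using le[of x v] le[of "-x" "-v"] by simp
qed

lemma phi_tilde_eqI:
  assumes lower: "\<And>xi xi' g. admissible q T t x v xi xi' g \<Longrightarrow>
                    C \<le> (1/q) * integral {t..T} (\<lambda>s. \<bar>g s\<bar> powr q)"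
    and adm: "admissible q T t x v xi xi' g"
    and cost: "(1/q) * integral {t..T} (\<lambda>s. \<bar>g s\<bar> powr q) = C"
  shows "phi_tilde q T t x v = ereal C"
  unfolding phi_tilde_def
proof (rule antisym)
  show "(INF c\<in>{(xi, xi', g). admissible q T t x v xi xi' g}.
          ereal ((1/q) * integral {t..T} (\<lambda>s. \<bar>snd (snd c) s\<bar> powr q))) \<le> ereal C"
    using adm cost by (intro INF_lower2[of "(xi, xi', g)"]) auto
  show "ereal C \<le> (INF c\<in>{(xi, xi', g). admissible q T t x v xi xi' g}.
          ereal ((1/q) * integral {t..T} (\<lambda>s. \<bar>snd (snd c) s\<bar> powr q)))"
    using lower by (intro INF_greatest) auto
qed

lemma integral_weighted_young:
  fixes g :: "real \<Rightarrow> real"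
  assumes q: "q > 1" and p: "p = q / (q - 1)" and \<beta>: "\<beta> \<ge> 0" and \<sigma>: "t \<le> \<sigma>"
    and g: "g absolutely_integrable_on {t..\<sigma>}" and gq: "(\<lambda>r. \<bar>g r\<bar> powr q) integrable_on {t..\<sigma>}"
  shows "\<beta> * integral {t..\<sigma>} (\<lambda>r. (\<sigma> - r) * - g r)
           \<le> \<beta> powr p * (\<sigma> - t) powr (p + 1) / (p * (p + 1)) + integral {t..\<sigma>} (\<lambda>r. \<bar>g r\<bar> powr q) / q"
proof -
  have p1: "p > 1" and pq: "1/p + 1/q = 1" using q unfolding p by (auto simp: field_simps)
  have w_int: "(\<lambda>r. (\<sigma> - r) * - g r) integrable_on {t..\<sigma>}"
    using integrable_neg[OF integrable_on_moment[OF g order.refl, of \<sigma>]] by (simp add: algebra_simps)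
  have kernel: "((\<lambda>r. trunc_powr p (\<sigma> - r)) has_integral (\<sigma> - t) powr (p + 1) / (p + 1)) {t..\<sigma>}"
    using has_integral_trunc_powr[of p t \<sigma> \<sigma>] p1 \<sigma> by (simp add: trunc_powr_eq_powr trunc_powr_eq_0)
  have "\<beta> * integral {t..\<sigma>} (\<lambda>r. (\<sigma> - r) * - g r) = integral {t..\<sigma>} (\<lambda>r. \<beta> * ((\<sigma> - r) * - g r))"
    by (rule Henstock_Kurzweil_Integration.integral_mult_right[symmetric])
  also have "\<dots> \<le> integral {t..\<sigma>} (\<lambda>r. \<beta> powr p * trunc_powr p (\<sigma> - r) / p + \<bar>g r\<bar> powr q / q)"
  proof (rule integral_le)
    fix r assume r: "r \<in> {t..\<sigma>}"
    have "(\<sigma> - r) * - g r \<le> (\<sigma> - r) * \<bar>g r\<bar>"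
      using r by (intro mult_left_mono) auto
    then have "\<beta> * ((\<sigma> - r) * - g r) \<le> (\<beta> * (\<sigma> - r)) * \<bar>g r\<bar>"
      using mult_left_mono[OF _ \<beta>] by (simp only: mult.assoc)
    also have "\<dots> \<le> (\<beta> * (\<sigma> - r)) powr p / p + \<bar>g r\<bar> powr q / q"
      using r \<beta> by (intro Youngs_inequality p1 q pq) auto
    finally show "\<beta> * ((\<sigma> - r) * - g r) \<le> \<beta> powr p * trunc_powr p (\<sigma> - r) / p + \<bar>g r\<bar> powr q / q"
      using r \<beta> by (simp add: powr_mult trunc_powr_eq_powr)
  next
    show "(\<lambda>r. \<beta> * ((\<sigma> - r) * - g r)) integrable_on {t..\<sigma>}"
      using w_int by (rule integrable_on_mult_right)
    have "(\<lambda>r. trunc_powr p (\<sigma> - r)) integrable_on {t..\<sigma>}"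
      using kernel by blast
    then show "(\<lambda>r. \<beta> powr p * trunc_powr p (\<sigma> - r) / p + \<bar>g r\<bar> powr q / q) integrable_on {t..\<sigma>}"
      using gq by (intro integrable_add integrable_on_divide integrable_on_mult_right)
  qed
  also have "\<dots> = \<beta> powr p * (\<sigma> - t) powr (p + 1) / (p * (p + 1)) + integral {t..\<sigma>} (\<lambda>r. \<bar>g r\<bar> powr q) / q"
    using has_integral_add[OF has_integral_divide[OF has_integral_mult_right[OF kernel, of "\<beta> powr p"], of p]
        has_integral_divide[OF integrable_integral[OF gq], of q]]
    by (intro integral_unique) (simp add: field_simps)
  finally show ?thesis .
qed

lemma admissible_cost_lower_bound:
  fixes g xi xi' :: "real \<Rightarrow> real"
  assumes q: "q > 1" and p: "p = q / (q - 1)"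
    and adm: "admissible q T t x v xi xi' g" and s: "0 < s" "t + s \<le> T" and \<beta>: "\<beta> \<ge> 0"
  shows "\<beta> * (v * s - (1 - x)) - \<beta> powr p * s powr (p + 1) / (p * (p + 1))
           \<le> (1/q) * integral {t..T} (\<lambda>r. \<bar>g r\<bar> powr q)"
proof -
  define \<sigma> where "\<sigma> = t + s"
  have W: "W2q q t T xi xi' g" and init: "xi t = x" "xi' t = v"
    and box: "\<forall>s\<in>{t..T}. xi s \<in> {-1..1}"
    using adm unfolding admissible_def by blast+
  have g: "g absolutely_integrable_on {t..T}" and gq: "(\<lambda>s. \<bar>g s\<bar> powr q) integrable_on {t..T}"
    using W unfolding W2q_def by blast+
  have \<sigma>: "t \<le> \<sigma>" "\<sigma> \<le> T" and sub: "{t..\<sigma>} \<subseteq> {t..T}" using s unfolding \<sigma>_def by auto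
  have "xi \<sigma> \<le> 1" using box \<sigma> by auto
  then have "v * s - (1 - x) \<le> integral {t..\<sigma>} (\<lambda>r. (\<sigma> - r) * - g r)"
    using W2q_taylor[OF W \<sigma>] init by (simp add: integral_neg \<sigma>_def)
  then have "\<beta> * (v * s - (1 - x)) \<le> \<beta> * integral {t..\<sigma>} (\<lambda>r. (\<sigma> - r) * - g r)"
    using \<beta> by (rule mult_left_mono)
  also have "\<dots> \<le> \<beta> powr p * s powr (p + 1) / (p * (p + 1)) + integral {t..\<sigma>} (\<lambda>r. \<bar>g r\<bar> powr q) / q"
    using integral_weighted_young[OF q p \<beta> \<sigma>(1) absolutely_integrable_on_subinterval[OF g sub]
        integrable_subinterval_real[OF gq sub]]
    by (simp add: \<sigma>_def)
  also have "\<dots> \<le> \<beta> powr p * s powr (p + 1) / (p * (p + 1)) + integral {t..T} (\<lambda>r. \<bar>g r\<bar> powr q) / q"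
    using integral_subset_le[OF sub integrable_subinterval_real[OF gq sub] gq] q
    by (simp add: divide_right_mono)
  finally show ?thesis
    by simp
qed

lemma W2q_if_continuous_second_derivative:
  assumes q: "q > 0"
    and xi: "\<And>s. s \<in> {t..T} \<Longrightarrow> (xi has_real_derivative xi' s) (at s within {t..T})"
    and xi': "\<And>s. s \<in> {t..T} \<Longrightarrow> (xi' has_real_derivative g s) (at s within {t..T})"
    and g: "continuous_on {t..T} g"
  shows "W2q q t T xi xi' g"
  unfolding W2q_def
proof (intro conjI ballI xi)
  show "g absolutely_integrable_on {t..T}"
    using g by (rule absolutely_integrable_continuous_real)
  show "(\<lambda>s. \<bar>g s\<bar> powr q) integrable_on {t..T}"
    using g q by (intro integrable_continuous_real continuous_on_powr') (auto intro: continuous_intros)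
  fix s assume s: "s \<in> {t..T}"
  have "(xi' has_real_derivative g r) (at r within {t..s})" if "r \<in> {t..s}" for r
    using s that by (intro DERIV_subset[OF xi']) auto
  then have "(g has_integral xi' s - xi' t) {t..s}"
    using s by (intro fundamental_theorem_of_calculus)
      (auto simp: has_real_derivative_iff_has_vector_derivative[symmetric])
  then show "xi' s = xi' t + integral {t..s} g"
    by (simp add: integral_unique)
qed

lemma braking_curve_cost:
  assumes q: "q > 1" and p: "p = q / (q - 1)" and c: "c \<ge> 0" and \<sigma>: "t \<le> \<sigma>" "\<sigma> \<le> T"
  shows "((\<lambda>r. \<bar>- c * trunc_powr (p - 1) (\<sigma> - r)\<bar> powr q) has_integral
           c powr q * ((\<sigma> - t) powr (p + 1) / (p + 1))) {t..T}"
proof -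
  have p1: "p > 1" and pq: "(p - 1) * q = p" using q unfolding p by (auto simp: field_simps)
  have "(\<lambda>r. \<bar>- c * trunc_powr (p - 1) (\<sigma> - r)\<bar> powr q) = (\<lambda>r. c powr q * trunc_powr p (\<sigma> - r))"
    using c by (simp add: abs_mult trunc_powr_nonneg powr_mult trunc_powr_def powr_powr pq)
  moreover have "((\<lambda>r. trunc_powr p (\<sigma> - r)) has_integral (\<sigma> - t) powr (p + 1) / (p + 1)) {t..T}"
    using has_integral_trunc_powr[of p t T \<sigma>] p1 \<sigma> by (simp add: trunc_powr_eq_powr trunc_powr_eq_0)
  ultimately show ?thesis
    by (simp only:) (rule has_integral_mult_right)
qed

lemma has_real_derivative_braking_curve:
  fixes p c s \<sigma> x v t :: real
  assumes p: "p > 1"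
  defines "xi \<equiv> \<lambda>r. x + v * (r - t)
             - (c / p) * (s powr p * (r - t) - (s powr (p + 1) - trunc_powr (p + 1) (\<sigma> - r)) / (p + 1))"
    and "xi' \<equiv> \<lambda>r. v - (c / p) * (s powr p - trunc_powr p (\<sigma> - r))"
  shows "(xi has_real_derivative xi' r) (at r within S)"
    and "(xi' has_real_derivative - c * trunc_powr (p - 1) (\<sigma> - r)) (at r within S)"
proof -
  have "(xi has_real_derivative v - (c / p) * (s powr p - (p + 1) * trunc_powr p (\<sigma> - r) / (p + 1)))
      (at r within S)"
    unfolding xi_def using p by (auto intro!: derivative_eq_intros)
  then show "(xi has_real_derivative xi' r) (at r within S)"
    using p by (simp add: xi'_def)
  show "(xi' has_real_derivative - c * trunc_powr (p - 1) (\<sigma> - r)) (at r within S)"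
    unfolding xi'_def using p by (auto intro!: derivative_eq_intros simp: field_simps)
qed

lemma braking_curve_values:
  fixes p c s \<sigma> x v t :: real
  assumes p: "p > 1" and s: "s > 0" and \<sigma>: "\<sigma> = t + s"
  defines "xi \<equiv> \<lambda>r. x + v * (r - t)
             - (c / p) * (s powr p * (r - t) - (s powr (p + 1) - trunc_powr (p + 1) (\<sigma> - r)) / (p + 1))"
    and "xi' \<equiv> \<lambda>r. v - (c / p) * (s powr p - trunc_powr p (\<sigma> - r))"
  shows "xi t = x" "xi' t = v" "xi \<sigma> = x + v * s - c * s powr (p + 1) / (p + 1)"
    and "r \<ge> \<sigma> \<Longrightarrow> xi r = xi \<sigma> + (v - c * s powr p / p) * (r - \<sigma>)"
    and "c \<ge> 0 \<Longrightarrow> xi' r \<ge> v - c * s powr p / p"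
proof -
  have at_t: "trunc_powr e (\<sigma> - t) = s powr e" for e
    using s by (simp add: \<sigma> trunc_powr_eq_powr)
  have after: "trunc_powr e (\<sigma> - r) = 0" if "r \<ge> \<sigma>" for e r
    using that by (simp add: trunc_powr_eq_0)
  show "xi t = x" "xi' t = v" by (simp_all add: xi_def xi'_def at_t)
  have "s powr p * s = s powr (p + 1)" using s by (simp add: powr_add)
  then have "xi \<sigma> = x + v * s - (c / p) * (s powr (p + 1) - s powr (p + 1) / (p + 1))"
    by (simp add: xi_def \<sigma> trunc_powr_eq_0)
  also have "s powr (p + 1) - s powr (p + 1) / (p + 1) = s powr (p + 1) * p / (p + 1)"
    using p by (simp add: field_simps)
  finally show "xi \<sigma> = x + v * s - c * s powr (p + 1) / (p + 1)"
    using p by simp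
  show "xi r = xi \<sigma> + (v - c * s powr p / p) * (r - \<sigma>)" if "r \<ge> \<sigma>"
    using that after[of \<sigma>] by (simp add: xi_def after algebra_simps diff_divide_distrib add_divide_distrib)
  show "xi' r \<ge> v - c * s powr p / p" if "c \<ge> 0"
  proof -
    have "(c / p) * (s powr p - trunc_powr p (\<sigma> - r)) \<le> (c / p) * s powr p"
      using that p by (intro mult_left_mono) (auto simp: trunc_powr_nonneg)
    then show ?thesis by (simp add: xi'_def)
  qed
qed

lemma admissible_braking_curve:
  fixes q p T t x v s c :: real
  assumes q: "q > 1" and p: "p = q / (q - 1)"
    and s: "0 < s" "t + s \<le> T" and x: "-1 \<le> x" and c: "c \<ge> 0"
    and reach: "c * s powr (p + 1) / (p + 1) = v * s - (1 - x)"
    and slope: "c * s powr p / p \<le> v"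
    and stop: "t + s = T \<or> v = c * s powr p / p"
  obtains xi xi' g where "admissible q T t x v xi xi' g"
    and "(1/q) * integral {t..T} (\<lambda>r. \<bar>g r\<bar> powr q) = c powr q * s powr (p + 1) / (q * (p + 1))"
proof -
  define \<sigma> where "\<sigma> = t + s"
  define g where "g r = - c * trunc_powr (p - 1) (\<sigma> - r)" for r
  define xi' where "xi' = (\<lambda>r. v - (c / p) * (s powr p - trunc_powr p (\<sigma> - r)))"
  define xi where "xi = (\<lambda>r. x + v * (r - t)
      - (c / p) * (s powr p * (r - t) - (s powr (p + 1) - trunc_powr (p + 1) (\<sigma> - r)) / (p + 1)))"
  have p1: "p > 1" using q unfolding p by (auto simp: field_simps)
  have deriv: "(xi has_real_derivative xi' r) (at r within S)" "(xi' has_real_derivative g r) (at r within S)"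
    for r S
    unfolding xi_def xi'_def g_def by (rule has_real_derivative_braking_curve[OF p1])+
  note curve = braking_curve_values[OF p1 s(1) \<sigma>_def]
  have init: "xi t = x" "xi' t = v"
    unfolding xi_def xi'_def by (rule curve)+
  have "xi \<sigma> = x + v * s - c * s powr (p + 1) / (p + 1)"
    unfolding xi_def by (rule curve)
  then have xi_\<sigma>: "xi \<sigma> = 1" using reach by simp
  have after: "xi r = xi \<sigma> + (v - c * s powr p / p) * (r - \<sigma>)" if "r \<ge> \<sigma>" for r
    unfolding xi_def by (rule curve(4)[OF that])
  have "xi' r \<ge> v - c * s powr p / p" for r
    unfolding xi'_def by (rule curve(5)[OF c])
  then have mono: "xi a \<le> xi b" if "a \<le> b" for a b
    using DERIV_nonneg_imp_nondecreasing[OF that] deriv(1) slope by (meson diff_ge_0_iff_ge order.trans)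
  have box: "xi r \<in> {-1..1}" if r: "r \<in> {t..T}" for r
  proof -
    have "xi r \<le> 1"
    proof (cases "r \<le> \<sigma>")
      case True then show ?thesis using mono xi_\<sigma> by fastforce
    next
      case False
      \<comment> \<open>contact before \<open>T\<close>: the stopping condition makes the velocity vanish from \<open>\<sigma>\<close> on\<close>
      then have "v = c * s powr p / p" using stop r by (auto simp: \<sigma>_def)
      then show ?thesis using after[of r] False xi_\<sigma> by simp
    qed
    moreover have "-1 \<le> xi r" using mono[of t r] r init x by auto
    ultimately show ?thesis by simp
  qed
  have W: "W2q q t T xi xi' g"
    using q p1 by (intro W2q_if_continuous_second_derivative deriv) (auto simp: g_def intro!: continuous_intros)
  have "((\<lambda>r. \<bar>g r\<bar> powr q) has_integral c powr q * (s powr (p + 1) / (p + 1))) {t..T}"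
    using braking_curve_cost[OF q p c, of t \<sigma> T] s by (simp add: g_def \<sigma>_def)
  then have "(1/q) * integral {t..T} (\<lambda>r. \<bar>g r\<bar> powr q) = c powr q * s powr (p + 1) / (q * (p + 1))"
    by (simp add: integral_unique)
  moreover have "admissible q T t x v xi xi' g"
    using W init box by (simp add: admissible_def)
  ultimately show ?thesis using that by blast
qed

lemma phi_tilde_eq_braking_cost:
  fixes q p T t x v s c :: real
  assumes q: "q > 1" and p: "p = q / (q - 1)"
    and s: "0 < s" "t + s \<le> T" and x: "-1 \<le> x" and c: "c \<ge> 0"
    and reach: "c * s powr (p + 1) / (p + 1) = v * s - (1 - x)"
    and slope: "c * s powr p / p \<le> v"
    and stop: "t + s = T \<or> v = c * s powr p / p"
  shows "phi_tilde q T t x v = ereal (c powr q * s powr (p + 1) / (q * (p + 1)))"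
proof -
  obtain xi xi' g where adm: "admissible q T t x v xi xi' g"
    and cost: "(1/q) * integral {t..T} (\<lambda>r. \<bar>g r\<bar> powr q) = c powr q * s powr (p + 1) / (q * (p + 1))"
    by (rule admissible_braking_curve[OF assms])
  have p1: "p > 1" and qp: "(q - 1) * p = q" using q unfolding p by (auto simp: field_simps)
  \<comment> \<open>for \<open>\<beta> = c powr (q - 1)\<close> Young's inequality is an equality along the braking curve\<close>
  define \<beta> where "\<beta> = c powr (q - 1)"
  define X where "X = c powr q * s powr (p + 1)"
  have "\<beta> * c = c powr q"
    using c q by (cases "c = 0") (auto simp: \<beta>_def powr_diff)
  moreover have "\<beta> powr p = c powr q"
    by (simp add: \<beta>_def powr_powr qp)
  ultimately have "\<beta> * (v * s - (1 - x)) - \<beta> powr p * s powr (p + 1) / (p * (p + 1))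
      = X / (p + 1) - X / (p * (p + 1))"
    unfolding reach[symmetric] X_def by (simp add: mult.assoc[symmetric])
  also have "\<dots> = X / (p + 1) * ((p - 1) / p)"
    using p1 by (simp add: diff_divide_distrib right_diff_distrib)
  also have "(p - 1) / p = 1 / q"
    using q unfolding p by (simp add: field_simps)
  finally have "\<beta> * (v * s - (1 - x)) - \<beta> powr p * s powr (p + 1) / (p * (p + 1))
      = c powr q * s powr (p + 1) / (q * (p + 1))"
    by (simp add: X_def)
  then show ?thesis
    using admissible_cost_lower_bound[OF q p _ s, of x v _ _ _ \<beta>]
    by (intro phi_tilde_eqI[OF _ adm cost]) (simp add: \<beta>_def)
qed

section \<open>The explicit value function\<close>

lemma braking_cost_early_contact:
  fixes q p a v s c :: real
  assumes q: "q > 1" and p: "p = q / (q - 1)" and a: "a > 0" and v: "v > 0"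
    and s: "s = (p + 1) * a / v" and c: "c = p * v / s powr p"
  shows "c powr q * s powr (p + 1) / (q * (p + 1))
           = q powr (q - 1) / (2*q - 1) powr q * (v powr (2*q - 1) / a powr (q - 1))"
proof -
  have p0: "p > 0" using q unfolding p by simp
  then have s0: "s > 0" using a v unfolding s by simp
  then have c0: "c > 0" using p0 v unfolding c by simp
  have pq: "p * q = p + q" using q unfolding p by (simp add: field_simps)
  have lnp: "ln p = ln q - ln (q - 1)" and lnp1: "ln (p + 1) = ln (2*q - 1) - ln (q - 1)"
    using q unfolding p by (simp_all add: ln_div field_simps)
  have lns: "ln s = ln (p + 1) + ln a - ln v" and lnc: "ln c = ln p + ln v - p * ln s"
    using a v p0 s0 unfolding s c by (simp_all add: ln_div ln_mult ln_powr)
  have "ln (c powr q * s powr (p + 1) / (q * (p + 1))) = q * ln c + (p + 1) * ln s - ln q - ln (p + 1)"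
    using q c0 s0 p0 by (simp add: ln_mult ln_div ln_powr)
  also have "\<dots> = (q - 1) * ln q - q * ln (2*q - 1) + (2*q - 1) * ln v - (q - 1) * ln a"
    unfolding lnc lns lnp lnp1 using pq by algebra
  also have "\<dots> = ln (q powr (q - 1) / (2*q - 1) powr q * (v powr (2*q - 1) / a powr (q - 1)))"
    using q a v by (simp add: ln_mult ln_div ln_powr)
  finally show ?thesis
    using q a v c0 s0 p0 by (subst (asm) ln_inj_iff) auto
qed

lemma braking_cost_terminal_contact:
  fixes q p w \<tau> c :: real
  assumes q: "q > 1" and p: "p = q / (q - 1)" and w: "w > 0" and \<tau>: "\<tau> > 0"
    and c: "c = (p + 1) * w / \<tau> powr (p + 1)"
  shows "c powr q * \<tau> powr (p + 1) / (q * (p + 1))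
           = (1/q) * ((2*q - 1) powr (q - 1) / (q - 1) powr (q - 1)) * ((w / \<tau>) powr q / \<tau> powr (q - 1))"
proof -
  have p0: "p > 0" using q unfolding p by simp
  then have c0: "c > 0" using w \<tau> unfolding c by simp
  have pq: "p * q = p + q" using q unfolding p by (simp add: field_simps)
  have lnp1: "ln (p + 1) = ln (2*q - 1) - ln (q - 1)"
    using q unfolding p by (simp add: ln_div field_simps)
  have lnc: "ln c = ln (p + 1) + ln w - (p + 1) * ln \<tau>"
    using w \<tau> p0 unfolding c by (simp add: ln_div ln_mult ln_powr)
  have "ln (c powr q * \<tau> powr (p + 1) / (q * (p + 1))) = q * ln c + (p + 1) * ln \<tau> - ln q - ln (p + 1)"
    using q c0 \<tau> p0 by (simp add: ln_mult ln_div ln_powr)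
  also have "\<dots> = - ln q + (q - 1) * (ln (2*q - 1) - ln (q - 1)) + q * (ln w - ln \<tau>) - (q - 1) * ln \<tau>"
    unfolding lnc lnp1 using pq by algebra
  also have "\<dots> = ln ((1/q) * ((2*q - 1) powr (q - 1) / (q - 1) powr (q - 1)) * ((w / \<tau>) powr q / \<tau> powr (q - 1)))"
    using q w \<tau> by (simp add: ln_mult ln_div ln_powr right_diff_distrib)
  finally show ?thesis
    using q w c0 \<tau> p0 by (subst (asm) ln_inj_iff) auto
qed

lemma phi_tilde_eq_0:
  assumes q: "q > 0" and x: "-1 \<le> x" "x \<le> 1"
    and h: "-1 - x \<le> v * (T - t)" "v * (T - t) \<le> 1 - x"
  shows "phi_tilde q T t x v = 0"
proof -
  have box: "x + v * (r - t) \<in> {-1..1}" if r: "r \<in> {t..T}" for r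
  proof (cases "v \<ge> 0")
    case True
    then have "0 \<le> v * (r - t)" "v * (r - t) \<le> v * (T - t)" using r by (auto intro: mult_left_mono)
    then show ?thesis using x h by auto
  next
    case False
    then have "v * (r - t) \<le> 0" "v * (T - t) \<le> v * (r - t)"
      using r by (auto intro: mult_left_mono_neg mult_nonpos_nonneg)
    then show ?thesis using x h by auto
  qed
  have "admissible q T t x v (\<lambda>r. x + v * (r - t)) (\<lambda>r. v) (\<lambda>r. 0)"
    using box unfolding admissible_def W2q_def by (auto intro!: derivative_eq_intros)
  moreover have "0 \<le> (1/q) * integral {t..T} (\<lambda>s. \<bar>g s\<bar> powr q)"
    if "admissible q T t x v xi xi' g" for xi xi' g
    using that q unfolding admissible_def W2q_def by (simp add: integral_nonneg)
  ultimately have "phi_tilde q T t x v = ereal 0"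
    using q by (intro phi_tilde_eqI) auto
  then show ?thesis by (simp add: zero_ereal_def)
qed

lemma phi_tilde_terminal_contact:
  assumes q: "q > 1" and x: "-1 \<le> x" "x \<le> 1" and tT: "t \<le> T"
    and h: "1 - x \<le> v * (T - t)" "v * (T - t) \<le> (2*q - 1) / (q - 1) * (1 - x)"
  shows "phi_tilde q T t x v = ereal ((1/q) * ((2*q - 1) powr (q - 1) / (q - 1) powr (q - 1))
           * ((v + (x - 1) / (T - t)) powr q / (T - t) powr (q - 1)))"
proof -
  define p where "p = q / (q - 1)"
  define \<tau> where "\<tau> = T - t"
  define w where "w = v * \<tau> - (1 - x)"
  have p0: "p > 0" and k: "(2*q - 1) / (q - 1) = p + 1" using q by (auto simp: p_def field_simps)
  have vw: "v + (x - 1) / \<tau> = w / \<tau>" if "\<tau> \<noteq> 0"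
    using that by (simp add: w_def field_simps)
  show ?thesis
  proof (cases "w = 0")
    case True
    then have "phi_tilde q T t x v = 0"
      using q x by (intro phi_tilde_eq_0) (auto simp: w_def \<tau>_def)
    moreover have "(v + (x - 1) / (T - t)) powr q / (T - t) powr (q - 1) = 0"
      using True vw by (cases "\<tau> = 0") (simp_all add: \<tau>_def)
    ultimately show ?thesis by (simp only: mult_zero_right zero_ereal_def)
  next
    case False
    then have w: "w > 0" using h(1) by (simp add: w_def \<tau>_def)
    then have \<tau>: "\<tau> > 0" using tT x by (cases "\<tau> = 0") (auto simp: w_def \<tau>_def)
    define c where "c = (p + 1) * w / \<tau> powr (p + 1)"
    have c\<tau>: "c * \<tau> powr p / p = (p + 1) * w / (p * \<tau>)"
      using \<tau> p0 by (simp add: c_def powr_add field_simps)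
    have "v * \<tau> \<le> (p + 1) * (1 - x)"
      using h(2) k by (simp add: \<tau>_def)
    then have "(p + 1) * w \<le> p * (v * \<tau>)"
      by (simp add: w_def algebra_simps)
    then have "c * \<tau> powr p / p \<le> v"
      unfolding c\<tau> using \<tau> p0 by (simp add: divide_le_eq mult.commute mult.left_commute)
    then have "phi_tilde q T t x v = ereal (c powr q * \<tau> powr (p + 1) / (q * (p + 1)))"
      using q x w \<tau> p0 by (intro phi_tilde_eq_braking_cost[OF q p_def])
        (auto simp: c_def w_def \<tau>_def)
    also have "c powr q * \<tau> powr (p + 1) / (q * (p + 1))
        = (1/q) * ((2*q - 1) powr (q - 1) / (q - 1) powr (q - 1)) * ((w / \<tau>) powr q / \<tau> powr (q - 1))"
      by (rule braking_cost_terminal_contact[OF q p_def w \<tau> c_def])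
    finally show ?thesis using \<tau> vw by (simp add: \<tau>_def)
  qed
qed

lemma phi_tilde_early_contact:
  assumes q: "q > 1" and x: "-1 \<le> x" and tT: "t \<le> T"
    and h: "v * (T - t) \<ge> (2*q - 1) / (q - 1) * (1 - x)" "(2*q - 1) / (q - 1) * (1 - x) > 0"
  shows "phi_tilde q T t x v
           = ereal (q powr (q - 1) / (2*q - 1) powr q * (v powr (2*q - 1) / (1 - x) powr (q - 1)))"
proof -
  define p where "p = q / (q - 1)"
  define a where "a = 1 - x"
  have p0: "p > 0" and k: "(2*q - 1) / (q - 1) = p + 1" using q by (auto simp: p_def field_simps)
  have a: "a > 0" using h(2) p0 by (simp add: k a_def zero_less_mult_iff)
  have v\<tau>: "v * (T - t) \<ge> (p + 1) * a" using h(1) by (simp add: k a_def)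
  then have v: "v > 0"
    using a p0 tT by (smt (verit) mult_nonpos_nonneg mult_pos_pos)
  define s where "s = (p + 1) * a / v"
  define c where "c = p * v / s powr p"
  have "s \<le> T - t"
    using v\<tau> v by (simp add: s_def pos_divide_le_eq mult.commute)
  then have s: "s > 0" "t + s \<le> T"
    using v p0 a by (auto simp: s_def)
  have cs: "c * s powr p = p * v" using s by (simp add: c_def)
  have "phi_tilde q T t x v = ereal (c powr q * s powr (p + 1) / (q * (p + 1)))"
  proof (rule phi_tilde_eq_braking_cost[OF q p_def s x])
    show "c \<ge> 0" using p0 v by (simp add: c_def)
    have "c * s powr (p + 1) = p * v * s" using s cs by (simp add: powr_add)
    then show "c * s powr (p + 1) / (p + 1) = v * s - (1 - x)"
      using v p0 by (simp add: s_def a_def field_simps)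
  qed (use cs p0 in simp_all)
  also have "c powr q * s powr (p + 1) / (q * (p + 1))
      = q powr (q - 1) / (2*q - 1) powr q * (v powr (2*q - 1) / a powr (q - 1))"
    by (rule braking_cost_early_contact[OF q p_def a v s_def c_def])
  finally show ?thesis by (simp add: a_def)
qed

lemma phi_tilde_early_contact_reflected:
  assumes q: "q > 1" and x: "x \<le> 1" and tT: "t \<le> T"
    and h: "v * (T - t) \<le> - ((2*q-1)/(q-1)) * (1 + x)" "- ((2*q-1)/(q-1)) * (1 + x) < 0"
  shows "phi_tilde q T t x v
           = ereal (q powr (q-1) / (2*q-1) powr q * (\<bar>v\<bar> powr (2*q-1) / (1 + x) powr (q-1)))"
proof -
  have "v < 0" using h tT by (smt (verit) mult_nonneg_nonneg)
  moreover have "phi_tilde q T t (-x) (-v)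
      = ereal (q powr (q-1) / (2*q-1) powr q * ((-v) powr (2*q-1) / (1 - (-x)) powr (q-1)))"
    using h x by (intro phi_tilde_early_contact[OF q _ tT]) auto
  ultimately show ?thesis
    by (simp add: phi_tilde_uminus)
qed

lemma phi_tilde_terminal_contact_reflected:
  assumes q: "q > 1" and x: "-1 \<le> x" "x \<le> 1" and tT: "t \<le> T"
    and h: "- ((2*q-1)/(q-1)) * (1 + x) \<le> v * (T - t)" "v * (T - t) \<le> - (1 + x)"
  shows "phi_tilde q T t x v = ereal ((1/q) * ((2*q-1) powr (q-1) / (q-1) powr (q-1)) *
           (\<bar>v + (1 + x) / (T - t)\<bar> powr q / (T - t) powr (q-1)))"
proof -
  have "phi_tilde q T t (-x) (-v) = ereal ((1/q) * ((2*q-1) powr (q-1) / (q-1) powr (q-1)) *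
      ((-v + (-x - 1) / (T - t)) powr q / (T - t) powr (q-1)))"
    using h x by (intro phi_tilde_terminal_contact[OF q _ _ tT]) auto
  moreover have "(-v + (-x - 1) / (T - t)) powr q / (T - t) powr (q-1)
      = \<bar>v + (1 + x) / (T - t)\<bar> powr q / (T - t) powr (q-1)"
  proof (cases "t = T")
    case False
    have "v + (1 + x) / (T - t) = (v * (T - t) + (1 + x)) / (T - t)"
      using False by (simp add: field_simps)
    also have "\<dots> \<le> 0" using h tT False by (intro divide_nonpos_pos) auto
    finally have "-v + (-x - 1) / (T - t) = \<bar>v + (1 + x) / (T - t)\<bar>"
      by (simp add: diff_divide_distrib add_divide_distrib)
    then show ?thesis by simp
  qed simp
  ultimately show ?thesis
    by (metis phi_tilde_uminus)
qed

lemma phi_tilde_explicit: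
  fixes q T :: real
  assumes q: "q > 1"
  shows
   "(\<forall>t\<in>{0..T}. \<forall>x\<in>{-1..1}. \<forall>v.
      (v * (T - t) \<le> - ((2*q-1)/(q-1)) * (1 + x) \<and> - ((2*q-1)/(q-1)) * (1 + x) < 0 \<longrightarrow>
         phi_tilde q T t x v =
           ereal (q powr (q-1) / (2*q-1) powr q * (\<bar>v\<bar> powr (2*q-1) / (1 + x) powr (q-1)))) \<and>
      (- ((2*q-1)/(q-1)) * (1 + x) \<le> v * (T - t) \<and> v * (T - t) \<le> - (1 + x) \<longrightarrow>
         phi_tilde q T t x v =
           ereal ((1/q) * ((2*q-1) powr (q-1) / (q-1) powr (q-1)) *
                  (\<bar>v + (1 + x) / (T - t)\<bar> powr q / (T - t) powr (q-1)))) \<and>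
      (-1 - x \<le> v * (T - t) \<and> v * (T - t) \<le> 1 - x \<longrightarrow>
         phi_tilde q T t x v = 0) \<and>
      (1 - x \<le> v * (T - t) \<and> v * (T - t) \<le> ((2*q-1)/(q-1)) * (1 - x) \<longrightarrow>
         phi_tilde q T t x v =
           ereal ((1/q) * ((2*q-1) powr (q-1) / (q-1) powr (q-1)) *
                  ((v + (x - 1) / (T - t)) powr q / (T - t) powr (q-1)))) \<and>
      (v * (T - t) \<ge> ((2*q-1)/(q-1)) * (1 - x) \<and> ((2*q-1)/(q-1)) * (1 - x) > 0 \<longrightarrow>
         phi_tilde q T t x v =
           ereal (q powr (q-1) / (2*q-1) powr q * (v powr (2*q-1) / (1 - x) powr (q-1)))))"
proof (intro ballI allI conjI impI)
  fix t x v :: real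
  assume "t \<in> {0..T}" and "x \<in> {-1..1}"
  then have tT: "t \<le> T" and x: "-1 \<le> x" "x \<le> 1" by auto
  show "phi_tilde q T t x v
      = ereal (q powr (q-1) / (2*q-1) powr q * (\<bar>v\<bar> powr (2*q-1) / (1 + x) powr (q-1)))"
    if "v * (T - t) \<le> - ((2*q-1)/(q-1)) * (1 + x) \<and> - ((2*q-1)/(q-1)) * (1 + x) < 0"
    using that x tT by (intro phi_tilde_early_contact_reflected[OF q]) auto
  show "phi_tilde q T t x v = ereal ((1/q) * ((2*q-1) powr (q-1) / (q-1) powr (q-1)) *
      (\<bar>v + (1 + x) / (T - t)\<bar> powr q / (T - t) powr (q-1)))"
    if "- ((2*q-1)/(q-1)) * (1 + x) \<le> v * (T - t) \<and> v * (T - t) \<le> - (1 + x)"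
    using that x tT by (intro phi_tilde_terminal_contact_reflected[OF q]) auto
  show "phi_tilde q T t x v = 0"
    if "-1 - x \<le> v * (T - t) \<and> v * (T - t) \<le> 1 - x"
    using that q x by (intro phi_tilde_eq_0) auto
  show "phi_tilde q T t x v = ereal ((1/q) * ((2*q-1) powr (q-1) / (q-1) powr (q-1)) *
      ((v + (x - 1) / (T - t)) powr q / (T - t) powr (q-1)))"
    if "1 - x \<le> v * (T - t) \<and> v * (T - t) \<le> ((2*q-1)/(q-1)) * (1 - x)"
    using that x tT by (intro phi_tilde_terminal_contact[OF q]) auto
  show "phi_tilde q T t x v
      = ereal (q powr (q-1) / (2*q-1) powr q * (v powr (2*q-1) / (1 - x) powr (q-1)))"
    if "v * (T - t) \<ge> ((2*q-1)/(q-1)) * (1 - x) \<and> ((2*q-1)/(q-1)) * (1 - x) > 0"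
    using that x tT by (intro phi_tilde_early_contact[OF q]) auto
qed

section \<open>The self-similar profile\<close>

text \<open>For \<open>v \<ge> 0\<close> and \<open>x < 1\<close> the value function is
  \<open>(1 - x) powr q * (T - t) powr (1 - 2*q) * profile q (v * (T - t) / (1 - x))\<close>; the two branches
  of the profile meet where the optimal curve reaches the obstacle exactly at time \<open>T\<close> with zero velocity.\<close>

definition profile :: "real \<Rightarrow> real \<Rightarrow> real" where
  "profile q u = (if u \<le> (2*q - 1) / (q - 1)
     then (1/q) * ((2*q - 1) / (q - 1)) powr (q - 1) * trunc_powr q (u - 1)
     else q powr (q - 1) / (2*q - 1) powr q * u powr (2*q - 1))"

definition profile_deriv :: "real \<Rightarrow> real \<Rightarrow> real" where
  "profile_deriv q u = (if u \<le> (2*q - 1) / (q - 1)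
     then ((2*q - 1) / (q - 1)) powr (q - 1) * trunc_powr (q - 1) (u - 1)
     else (q / (2*q - 1)) powr (q - 1) * u powr (2*q - 2))"

lemma contact_ratio_gt_1: "q > 1 \<Longrightarrow> (2*q - 1) / (q - 1) > (1::real)"
  by (simp add: field_simps)

lemma profile_eq_0: "q > 1 \<Longrightarrow> u \<le> 1 \<Longrightarrow> profile q u = 0"
  using contact_ratio_gt_1[of q] by (simp add: profile_def trunc_powr_eq_0 order.trans)

lemma profile_deriv_eq_0: "q > 1 \<Longrightarrow> u \<le> 1 \<Longrightarrow> profile_deriv q u = 0"
  using contact_ratio_gt_1[of q] by (simp add: profile_deriv_def trunc_powr_eq_0 order.trans)

lemma profile_junction:
  fixes q :: real
  assumes q: "q > 1"
  defines "k \<equiv> (2*q - 1) / (q - 1)"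
  shows "(1/q) * k powr (q - 1) * (k - 1) powr q = q powr (q - 1) / (2*q - 1) powr q * k powr (2*q - 1)"
proof -
  have k1: "k - 1 = q / (q - 1)" and k0: "k > 1" using q by (auto simp: k_def field_simps)
  have lnk: "ln k = ln (2*q - 1) - ln (q - 1)" and lnk1: "ln (k - 1) = ln q - ln (q - 1)"
    using q unfolding k1 by (simp_all add: k_def ln_div)
  have "ln ((1/q) * k powr (q - 1) * (k - 1) powr q) = - ln q + (q - 1) * ln k + q * ln (k - 1)"
    using q k0 by (simp add: ln_mult ln_div ln_powr)
  also have "\<dots> = (q - 1) * ln q - q * ln (2*q - 1) + (2*q - 1) * ln k"
    unfolding lnk lnk1 by (simp add: algebra_simps)
  also have "\<dots> = ln (q powr (q - 1) / (2*q - 1) powr q * k powr (2*q - 1))"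
    using q k0 by (simp add: ln_mult ln_div ln_powr)
  finally show ?thesis
    using q k0 by (subst (asm) ln_inj_iff) auto
qed

lemma profile_deriv_junction:
  fixes q :: real
  assumes q: "q > 1"
  defines "k \<equiv> (2*q - 1) / (q - 1)"
  shows "k powr (q - 1) * (k - 1) powr (q - 1) = (q / (2*q - 1)) powr (q - 1) * k powr (2*q - 2)"
proof -
  have k1: "k - 1 = q / (q - 1)" and k0: "k > 1" using q by (auto simp: k_def field_simps)
  have lnk: "ln k = ln (2*q - 1) - ln (q - 1)" and lnk1: "ln (k - 1) = ln q - ln (q - 1)"
    using q unfolding k1 by (simp_all add: k_def ln_div)
  have "ln (k powr (q - 1) * (k - 1) powr (q - 1)) = (q - 1) * ln k + (q - 1) * ln (k - 1)"
    using q k0 by (simp add: ln_mult ln_powr)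
  also have "\<dots> = (q - 1) * (ln q - ln (2*q - 1)) + (2*q - 2) * ln k"
    unfolding lnk lnk1 by (simp add: algebra_simps)
  also have "\<dots> = ln ((q / (2*q - 1)) powr (q - 1) * k powr (2*q - 2))"
    using q k0 by (simp add: ln_mult ln_div ln_powr)
  finally show ?thesis
    using q k0 by (subst (asm) ln_inj_iff) auto
qed

lemma has_real_derivative_profile:
  assumes q: "q > 1"
  shows "(profile q has_real_derivative profile_deriv q u) (at u)"
proof -
  define k where "k = (2*q - 1) / (q - 1)"
  have k1: "k > 1" using contact_ratio_gt_1[OF q] by (simp add: k_def)
  define f where "f u = (1/q) * k powr (q - 1) * trunc_powr q (u - 1)" for u
  define g where "g u = q powr (q - 1) / (2*q - 1) powr q * u powr (2*q - 1)" for u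
  define f' where "f' u = k powr (q - 1) * trunc_powr (q - 1) (u - 1)" for u
  define g' where "g' u = (q / (2*q - 1)) powr (q - 1) * u powr (2*q - 2)" for u
  have "(f has_real_derivative f' u) (at u within S)" for u S
    using DERIV_trunc_powr[OF q, of "\<lambda>u. u - 1" 1 u S] q
    unfolding f_def f'_def by (auto intro!: derivative_eq_intros)
  moreover have "(g has_real_derivative g' u) (at u within S)" if "u > 0" for u S
  proof -
    have C: "q powr (q - 1) / (2*q - 1) powr q * (2*q - 1) = (q / (2*q - 1)) powr (q - 1)"
      using q by (simp add: powr_divide powr_diff)
    have "(g has_real_derivative q powr (q - 1) / (2*q - 1) powr q * ((2*q - 1) * u powr (2*q - 1 - 1)))
        (at u within S)"
      unfolding g_def using that q by (auto intro!: derivative_eq_intros)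
    moreover have "2*q - 1 - 1 = 2*q - 2" by simp
    ultimately show ?thesis
      unfolding g'_def C[symmetric] by (simp only: mult.assoc)
  qed
  moreover have "f k = g k" "f' k = g' k"
    using profile_junction[OF q] profile_deriv_junction[OF q] k1
    by (simp_all add: f_def g_def f'_def g'_def k_def trunc_powr_eq_powr)
  ultimately have "((\<lambda>u. if u \<in> {..k} then f u else g u) has_derivative
      (if u \<in> {..k} then (\<lambda>h. f' u * h) else (\<lambda>h. g' u * h))) (at u within ({..k} \<union> {k<..}))"
    using k1 by (intro has_derivative_If_within_closures)
      (auto simp: has_field_derivative_def)
  moreover have "{..k} \<union> {k<..} = UNIV" by auto
  moreover have "profile q = (\<lambda>u. if u \<in> {..k} then f u else g u)"
    by (auto simp: fun_eq_iff profile_def f_def g_def k_def)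
  moreover have "profile_deriv q u = (if u \<in> {..k} then f' u else g' u)"
    by (auto simp: profile_deriv_def f'_def g'_def k_def)
  ultimately show ?thesis
    by (cases "u \<le> k") (simp_all add: has_field_derivative_def mult.commute)
qed

lemma continuous_profile_deriv: "q > 1 \<Longrightarrow> continuous_on UNIV (profile_deriv q)"
proof -
  assume q: "q > 1"
  define k where "k = (2*q - 1) / (q - 1)"
  have "k > 1" using contact_ratio_gt_1[OF q] by (simp add: k_def)
  then show ?thesis
    unfolding profile_deriv_def k_def[symmetric] using q profile_deriv_junction[OF q, folded k_def]
    by (intro continuous_on_cases_1) (auto intro!: continuous_intros simp: trunc_powr_eq_powr)
qed

lemma profile_ode_terminal_branch:
  assumes q: "q > 1" and p: "p = q / (q - 1)" and hu: "1 < u" "u \<le> (2*q - 1) / (q - 1)"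
  shows "(1 - 2*q + q*u) * profile q u + (u - u^2) * profile_deriv q u
           + (1/p) * \<bar>profile_deriv q u\<bar> powr p = 0"
proof -
  define k where "k = (2*q - 1) / (q - 1)"
  have k1: "k > 1" using contact_ratio_gt_1[OF q] by (simp add: k_def)
  have qp: "(q - 1) * p = q" using q unfolding p by (auto simp: field_simps)
  define w where "w = u - 1"
  define K where "K = k powr (q - 1)"
  have w: "w > 0" using hu by (simp add: w_def)
  have \<psi>: "profile q u = K / q * w powr q" and \<psi>': "profile_deriv q u = K * w powr (q - 1)"
    using hu by (simp_all add: profile_def profile_deriv_def K_def k_def w_def trunc_powr_eq_powr)
  have "(u - u^2) * profile_deriv q u = - u * K * w powr q"
    using w by (simp add: \<psi>' w_def power2_eq_square powr_diff field_simps)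
  moreover have "\<bar>profile_deriv q u\<bar> powr p = K * w powr q * k"
  proof -
    have "K \<ge> 0" by (simp add: K_def)
    then have "\<bar>profile_deriv q u\<bar> powr p = K powr p * (w powr (q - 1)) powr p"
      by (simp add: \<psi>' abs_mult powr_mult)
    also have "K powr p = K * k"
      unfolding K_def powr_powr qp using k1 by (simp add: powr_diff)
    also have "(w powr (q - 1)) powr p = w powr q" by (simp add: powr_powr qp)
    finally show ?thesis by simp
  qed
  moreover have "k / p = (2*q - 1) / q"
    using q by (simp add: k_def p field_simps)
  ultimately have "(1 - 2*q + q*u) * profile q u + (u - u^2) * profile_deriv q u
      + (1/p) * \<bar>profile_deriv q u\<bar> powr p
      = (1 - 2*q + q*u) * (K / q * w powr q) - u * K * w powr q + K * w powr q * ((2*q - 1) / q)"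
    by (simp add: \<psi>) (metis mult.commute times_divide_eq_right)
  also have "\<dots> = K * w powr q * ((1 - 2*q + q*u) / q - u + (2*q - 1) / q)"
    using q by (simp add: field_simps)
  also have "(1 - 2*q + q*u) / q - u + (2*q - 1) / q = 0"
    using q by (simp add: field_simps)
  finally show ?thesis by simp
qed

lemma profile_ode_early_branch:
  assumes q: "q > 1" and p: "p = q / (q - 1)" and hu: "(2*q - 1) / (q - 1) < u"
  shows "(1 - 2*q + q*u) * profile q u + (u - u^2) * profile_deriv q u
           + (1/p) * \<bar>profile_deriv q u\<bar> powr p = 0"
proof -
  define k where "k = (2*q - 1) / (q - 1)"
  have k1: "k > 1" using contact_ratio_gt_1[OF q] by (simp add: k_def)
  have qp: "(q - 1) * p = q" and q_div_p: "q / p = q - 1"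
    using q unfolding p by (auto simp: field_simps)
  define C where "C = q powr (q - 1) / (2*q - 1) powr q"
  define U where "U = u powr (2*q - 1)"
  have u: "u > 0" using hu k1 by (simp add: k_def)
  have D: "(q / (2*q - 1)) powr (q - 1) = (2*q - 1) * C" and qC: "(q / (2*q - 1)) powr q = q * C"
    using q by (simp_all add: C_def powr_divide powr_diff field_simps)
  have \<psi>: "profile q u = C * U" and \<psi>': "profile_deriv q u = (2*q - 1) * C * u powr (2*q - 2)"
    using hu by (simp_all add: profile_def profile_deriv_def C_def U_def D)
  have "(u - u^2) * profile_deriv q u = (1 - u) * (2*q - 1) * C * U"
  proof -
    have "u * u powr (2*q - 2) = U" using u by (simp add: U_def powr_add[symmetric] powr_mult_base)
    then show ?thesis by (simp add: \<psi>' power2_eq_square algebra_simps)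
  qed
  moreover have "\<bar>profile_deriv q u\<bar> powr p = q * C * (u * U)"
  proof -
    have "(2*q - 1) * C \<ge> 0" using q by (simp add: C_def)
    then have "\<bar>profile_deriv q u\<bar> powr p = ((2*q - 1) * C * u powr (2*q - 2)) powr p"
      unfolding \<psi>' by simp
    also have "\<dots> = ((2*q - 1) * C) powr p * (u powr (2*q - 2)) powr p"
      by (rule powr_mult)
    also have "((2*q - 1) * C) powr p = (q / (2*q - 1)) powr q"
      unfolding D[symmetric] powr_powr qp ..
    also have "(u powr (2*q - 2)) powr p = u powr (2*q)"
    proof -
      have "(2*q - 2) * p = 2*q" using qp by (simp add: algebra_simps)
      then show ?thesis by (simp add: powr_powr)
    qed
    also have "u powr (2*q) = u * U" using u by (simp add: U_def powr_mult_base)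
    finally show ?thesis by (simp add: qC)
  qed
  ultimately have "(1 - 2*q + q*u) * profile q u + (u - u^2) * profile_deriv q u
      + (1/p) * \<bar>profile_deriv q u\<bar> powr p
      = C * U * ((1 - 2*q + q*u) + (1 - u) * (2*q - 1) + u * (q / p))"
    by (simp add: \<psi> algebra_simps)
  also have "(1 - 2*q + q*u) + (1 - u) * (2*q - 1) + u * (q / p) = 0"
    by (simp add: q_div_p algebra_simps)
  finally show ?thesis by simp
qed

lemma profile_ode:
  assumes q: "q > 1" and p: "p = q / (q - 1)"
  shows "(1 - 2*q + q*u) * profile q u + (u - u^2) * profile_deriv q u
           + (1/p) * \<bar>profile_deriv q u\<bar> powr p = 0"
proof -
  have "p > 0" using q unfolding p by simp
  consider "u \<le> 1" | "1 < u" "u \<le> (2*q - 1) / (q - 1)" | "(2*q - 1) / (q - 1) < u" by linarith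
  then show ?thesis
    by cases (use profile_eq_0[OF q] profile_deriv_eq_0[OF q] \<open>p > 0\<close>
        profile_ode_terminal_branch[OF q p] profile_ode_early_branch[OF q p] in auto)
qed

definition value_profile :: "real \<Rightarrow> real \<Rightarrow> real \<Rightarrow> real \<Rightarrow> real \<Rightarrow> real" where
  "value_profile q T t x v = (1 - x) powr q * (T - t) powr (1 - 2*q) * profile q (v * (T - t) / (1 - x))"

definition value_profile_dt :: "real \<Rightarrow> real \<Rightarrow> real \<Rightarrow> real \<Rightarrow> real \<Rightarrow> real" where
  "value_profile_dt q T t x v = - ((1 - x) powr q * (T - t) powr (1 - 2*q) / (T - t)) *
      ((1 - 2*q) * profile q (v * (T - t) / (1 - x))
        + (v * (T - t) / (1 - x)) * profile_deriv q (v * (T - t) / (1 - x)))"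

definition value_profile_dx :: "real \<Rightarrow> real \<Rightarrow> real \<Rightarrow> real \<Rightarrow> real \<Rightarrow> real" where
  "value_profile_dx q T t x v = - ((1 - x) powr q * (T - t) powr (1 - 2*q) / (1 - x)) *
      (q * profile q (v * (T - t) / (1 - x))
        - (v * (T - t) / (1 - x)) * profile_deriv q (v * (T - t) / (1 - x)))"

definition value_profile_dv :: "real \<Rightarrow> real \<Rightarrow> real \<Rightarrow> real \<Rightarrow> real \<Rightarrow> real" where
  "value_profile_dv q T t x v =
     (1 - x) powr q * (T - t) powr (1 - 2*q) * (T - t) / (1 - x) * profile_deriv q (v * (T - t) / (1 - x))"

lemma has_derivative_value_profile:
  assumes q: "q > 1" and t: "t < T" and x: "x < 1"
  shows "((\<lambda>z. value_profile q T (fst z) (fst (snd z)) (snd (snd z))) has_derivative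
           (\<lambda>h. value_profile_dt q T t x v * fst h + value_profile_dx q T t x v * fst (snd h)
                + value_profile_dv q T t x v * snd (snd h))) (at (t, x, v))"
proof -
  define a where "a = 1 - x"
  define \<tau> where "\<tau> = T - t"
  define u where "u = v * \<tau> / a"
  have a: "a > 0" and \<tau>: "\<tau> > 0" using t x by (auto simp: a_def \<tau>_def)
  have A: "((\<lambda>z. (1 - fst (snd z)) powr q) has_derivative (\<lambda>h. a powr q * (- fst (snd h) * q / a)))
      (at (t, x, v))"
    using a by (auto intro!: derivative_eq_intros simp: a_def)
  have B: "((\<lambda>z. (T - fst z) powr (1 - 2*q)) has_derivative
      (\<lambda>h. \<tau> powr (1 - 2*q) * (- fst h * (1 - 2*q) / \<tau>))) (at (t, x, v))"
    using \<tau> by (auto intro!: derivative_eq_intros simp: \<tau>_def)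
  have "((\<lambda>z. snd (snd z) * (T - fst z) / (1 - fst (snd z))) has_derivative
      (\<lambda>h. ((snd (snd h) * \<tau> - v * fst h) * a + v * \<tau> * fst (snd h)) / (a * a))) (at (t, x, v))"
    using a by (auto intro!: derivative_eq_intros simp: a_def \<tau>_def field_simps)
  then have P: "((\<lambda>z. profile q (snd (snd z) * (T - fst z) / (1 - fst (snd z)))) has_derivative
      (\<lambda>h. profile_deriv q u * (((snd (snd h) * \<tau> - v * fst h) * a + v * \<tau> * fst (snd h)) / (a * a))))
      (at (t, x, v))"
    using has_derivative_compose has_real_derivative_profile[OF q]
    by (fastforce simp: has_field_derivative_def u_def a_def \<tau>_def)
  have v: "v = u * a / \<tau>" using a \<tau> by (simp add: u_def)
  show ?thesis
    unfolding value_profile_def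
    by (rule has_derivative_eq_rhs[OF has_derivative_mult[OF has_derivative_mult[OF A B] P]], rule ext,
        unfold value_profile_dt_def value_profile_dx_def value_profile_dv_def fst_conv snd_conv
          a_def[symmetric] \<tau>_def[symmetric] u_def[symmetric])
      (use a \<tau> v in \<open>simp add: field_simps\<close>)
qed

lemma value_profile_hjb:
  assumes q: "q > 1" and p: "p = q / (q - 1)" and t: "t < T" and x: "x < 1"
  shows "- value_profile_dt q T t x v - v * value_profile_dx q T t x v
           + (1/p) * \<bar>value_profile_dv q T t x v\<bar> powr p = 0"
proof -
  define a where "a = 1 - x"
  define \<tau> where "\<tau> = T - t"
  define u where "u = v * \<tau> / a"
  define M where "M = a powr q * \<tau> powr (1 - 2*q)"
  have a: "a > 0" and \<tau>: "\<tau> > 0" and M: "M > 0" using t x by (auto simp: a_def \<tau>_def M_def)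
  have v: "v = u * a / \<tau>" using a \<tau> by (simp add: u_def)
  have pq: "p * (q - 1) = q" using q unfolding p by (simp add: field_simps)
  have scale: "(M * \<tau> / a) powr p = M / \<tau>"
  proof -
    have "ln ((M * \<tau> / a) powr p) = p * (q * ln a + (1 - 2*q) * ln \<tau> + ln \<tau> - ln a)"
      using a \<tau> M by (simp add: M_def ln_powr ln_mult ln_div)
    also have "\<dots> = (p * (q - 1)) * (ln a - 2 * ln \<tau>)"
      by (simp add: algebra_simps)
    also have "\<dots> = ln (M / \<tau>)"
      unfolding pq using a \<tau> by (simp add: M_def ln_powr ln_mult ln_div algebra_simps)
    finally show ?thesis using a \<tau> M by (subst (asm) ln_inj_iff) auto
  qed
  have dt: "value_profile_dt q T t x v = - (M / \<tau>) * ((1 - 2*q) * profile q u + u * profile_deriv q u)"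
    and dx: "value_profile_dx q T t x v = - (M / a) * (q * profile q u - u * profile_deriv q u)"
    and dv: "\<bar>value_profile_dv q T t x v\<bar> = M * \<tau> / a * \<bar>profile_deriv q u\<bar>"
    using a \<tau> M
    by (simp_all add: value_profile_dt_def value_profile_dx_def value_profile_dv_def abs_mult
        M_def[symmetric] a_def[symmetric] \<tau>_def[symmetric] u_def[symmetric])
  have dv_p: "\<bar>value_profile_dv q T t x v\<bar> powr p = M / \<tau> * \<bar>profile_deriv q u\<bar> powr p"
    unfolding dv powr_mult scale ..
  have "- value_profile_dt q T t x v - v * value_profile_dx q T t x v
        + (1/p) * \<bar>value_profile_dv q T t x v\<bar> powr p
      = M / \<tau> * ((1 - 2*q + q*u) * profile q u + (u - u^2) * profile_deriv q u
          + (1/p) * \<bar>profile_deriv q u\<bar> powr p)"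
    unfolding dt dx dv_p using a \<tau> by (simp add: v field_simps power2_eq_square)
  also have "\<dots> = 0" using profile_ode[OF q p, of u] by simp
  finally show ?thesis .
qed

lemma value_profile_vanishes:
  assumes q: "q > 1" and x: "x < 1" and small: "v * (T - t) \<le> 1 - x"
  shows "value_profile q T t x v = 0" "value_profile_dt q T t x v = 0"
    "value_profile_dx q T t x v = 0" "value_profile_dv q T t x v = 0"
proof -
  have "v * (T - t) / (1 - x) \<le> 1" using x small by simp
  then show "value_profile q T t x v = 0" "value_profile_dt q T t x v = 0"
    "value_profile_dx q T t x v = 0" "value_profile_dv q T t x v = 0"
    using profile_eq_0[OF q] profile_deriv_eq_0[OF q]
    by (simp_all add: value_profile_def value_profile_dt_def value_profile_dx_def value_profile_dv_def)
qed

lemma powr_1_minus_2: "x > 0 \<Longrightarrow> x powr (1 - 2*q) = 1 / (x powr q * x powr (q - 1))"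
  for x q :: real
  by (simp add: powr_add[symmetric] powr_minus_divide[symmetric])

lemma value_profile_terminal_contact:
  assumes q: "q > 1" and x: "x < 1" and t: "t \<le> T"
    and h: "1 - x < v * (T - t)" "v * (T - t) \<le> (2*q - 1) / (q - 1) * (1 - x)"
  shows "value_profile q T t x v = (1/q) * ((2*q - 1) powr (q - 1) / (q - 1) powr (q - 1))
           * ((v + (x - 1) / (T - t)) powr q / (T - t) powr (q - 1))"
proof -
  define a where "a = 1 - x"
  define \<tau> where "\<tau> = T - t"
  define w where "w = v * \<tau> - a"
  have a: "a > 0" and w: "w > 0" using x h by (simp_all add: a_def w_def \<tau>_def)
  then have \<tau>: "\<tau> > 0" using t by (cases "\<tau> = 0") (auto simp: w_def \<tau>_def)
  have u: "v * \<tau> / a - 1 = w / a" "v * \<tau> / a \<le> (2*q - 1) / (q - 1)"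
    using a h(2) by (simp_all add: w_def \<tau>_def a_def field_simps)
  have "v + (x - 1) / (T - t) = w / \<tau>" using \<tau> by (simp add: w_def a_def \<tau>_def field_simps)
  moreover have "profile q (v * \<tau> / a) = (1/q) * ((2*q - 1) / (q - 1)) powr (q - 1) * (w / a) powr q"
    using u a w by (simp add: profile_def trunc_powr_eq_powr)
  ultimately show ?thesis
    using a \<tau> by (simp add: value_profile_def powr_divide powr_1_minus_2 flip: a_def \<tau>_def)
qed

lemma value_profile_early_contact:
  assumes q: "q > 1" and x: "x < 1" and t: "t \<le> T"
    and h: "(2*q - 1) / (q - 1) * (1 - x) < v * (T - t)"
  shows "value_profile q T t x v = q powr (q - 1) / (2*q - 1) powr q * (v powr (2*q - 1) / (1 - x) powr (q - 1))"
proof -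
  define a where "a = 1 - x"
  define \<tau> where "\<tau> = T - t"
  have a: "a > 0" using x by (simp add: a_def)
  have "(2*q - 1) / (q - 1) * a > 0"
    using a contact_ratio_gt_1[OF q] by (intro mult_pos_pos) auto
  then have v\<tau>: "v * \<tau> > 0" using h by (simp add: a_def \<tau>_def)
  then have \<tau>: "\<tau> > 0" and v: "v > 0"
    using t by (auto simp: \<tau>_def zero_less_mult_iff)
  have "v * \<tau> / a > (2*q - 1) / (q - 1)" using a h by (simp add: a_def \<tau>_def field_simps)
  then have "value_profile q T t x v
      = q powr (q - 1) / (2*q - 1) powr q * (a powr q * \<tau> powr (1 - 2*q) * (v * \<tau> / a) powr (2*q - 1))"
    by (simp add: value_profile_def profile_def mult_ac flip: a_def \<tau>_def)
  also have "a powr q * \<tau> powr (1 - 2*q) * (v * \<tau> / a) powr (2*q - 1)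
      = v powr (2*q - 1) * (a powr q / a powr (2*q - 1)) * (\<tau> powr (1 - 2*q) * \<tau> powr (2*q - 1))"
    using a \<tau> v by (simp add: powr_divide powr_mult)
  also have "a powr q / a powr (2*q - 1) = 1 / a powr (q - 1)"
    using a by (simp add: powr_diff[symmetric] powr_minus_divide[symmetric])
  also have "\<tau> powr (1 - 2*q) * \<tau> powr (2*q - 1) = 1"
    using \<tau> by (simp add: powr_add[symmetric])
  finally show ?thesis by (simp add: a_def)
qed

lemma phi_tilde_eq_value_profile:
  assumes q: "q > 1" and t: "t \<le> T" and x: "-1 \<le> x" "x < 1" and v: "v \<ge> 0"
  shows "phi_tilde q T t x v = ereal (value_profile q T t x v)"
proof -
  consider "v * (T - t) \<le> 1 - x"
    | "1 - x < v * (T - t)" "v * (T - t) \<le> (2*q - 1) / (q - 1) * (1 - x)"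
    | "(2*q - 1) / (q - 1) * (1 - x) < v * (T - t)"
    by linarith
  then show ?thesis
  proof cases
    case 1
    moreover have "0 \<le> v * (T - t)" using v t by simp
    ultimately show ?thesis
      using q x value_profile_vanishes(1)[OF q x(2) 1] by (simp add: phi_tilde_eq_0 zero_ereal_def)
  next
    case 2
    then show ?thesis
      using q x t by (simp add: phi_tilde_terminal_contact value_profile_terminal_contact)
  next
    case 3
    moreover have "(2*q - 1) / (q - 1) * (1 - x) > 0"
      using x contact_ratio_gt_1[OF q] by (intro mult_pos_pos) auto
    ultimately show ?thesis
      using q x t by (simp add: phi_tilde_early_contact value_profile_early_contact)
  qed
qed

section \<open>Regularity and the Hamilton-Jacobi equation\<close>

lemma continuous_on_profile [continuous_intros]:
  "q > 1 \<Longrightarrow> continuous_on S f \<Longrightarrow> continuous_on S (\<lambda>z. profile q (f z))"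
  using continuous_on_compose2[of UNIV "profile q" S f] has_real_derivative_profile
  by (meson DERIV_continuous continuous_at_imp_continuous_on subset_UNIV)

lemma continuous_on_profile_deriv [continuous_intros]:
  "q > 1 \<Longrightarrow> continuous_on S f \<Longrightarrow> continuous_on S (\<lambda>z. profile_deriv q (f z))"
  using continuous_on_compose2[OF continuous_profile_deriv] by blast

lemma has_derivative_value_profile_reflect:
  assumes q: "q > 1" and t: "t < T" and x: "-1 < x"
  shows "((\<lambda>z. value_profile q T (fst z) (- fst (snd z)) (- snd (snd z))) has_derivative
           (\<lambda>h. value_profile_dt q T t (-x) (-v) * fst h - value_profile_dx q T t (-x) (-v) * fst (snd h)
                - value_profile_dv q T t (-x) (-v) * snd (snd h))) (at (t, x, v))"
proof -
  have "((\<lambda>z::real \<times> real \<times> real. (fst z, - fst (snd z), - snd (snd z))) has_derivative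
      (\<lambda>h. (fst h, - fst (snd h), - snd (snd h)))) (at (t, x, v))"
    by (intro derivative_intros)
  moreover have "((\<lambda>z. value_profile q T (fst z) (fst (snd z)) (snd (snd z))) has_derivative
      (\<lambda>h. value_profile_dt q T t (-x) (-v) * fst h + value_profile_dx q T t (-x) (-v) * fst (snd h)
         + value_profile_dv q T t (-x) (-v) * snd (snd h))) (at (t, -x, -v))"
    using has_derivative_value_profile[OF q t, of "-x" "-v"] x by simp
  ultimately show ?thesis
    using has_derivative_compose by fastforce
qed

definition sym_value_profile :: "real \<Rightarrow> real \<Rightarrow> real \<times> real \<times> real \<Rightarrow> real" where
  "sym_value_profile q T z = value_profile q T (fst z) (fst (snd z)) (snd (snd z))
     + value_profile q T (fst z) (- fst (snd z)) (- snd (snd z))"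

definition sym_value_profile_dt :: "real \<Rightarrow> real \<Rightarrow> real \<times> real \<times> real \<Rightarrow> real" where
  "sym_value_profile_dt q T z = value_profile_dt q T (fst z) (fst (snd z)) (snd (snd z))
     + value_profile_dt q T (fst z) (- fst (snd z)) (- snd (snd z))"

definition sym_value_profile_dx :: "real \<Rightarrow> real \<Rightarrow> real \<times> real \<times> real \<Rightarrow> real" where
  "sym_value_profile_dx q T z = value_profile_dx q T (fst z) (fst (snd z)) (snd (snd z))
     - value_profile_dx q T (fst z) (- fst (snd z)) (- snd (snd z))"

definition sym_value_profile_dv :: "real \<Rightarrow> real \<Rightarrow> real \<times> real \<times> real \<Rightarrow> real" where
  "sym_value_profile_dv q T z = value_profile_dv q T (fst z) (fst (snd z)) (snd (snd z))
     - value_profile_dv q T (fst z) (- fst (snd z)) (- snd (snd z))"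

lemma phi_tilde_eq_sym_value_profile:
  assumes q: "q > 1" and t: "t \<le> T" and x: "\<bar>x\<bar> < 1"
  shows "phi_tilde q T t x v = ereal (sym_value_profile q T (t, x, v))"
proof (cases "v \<ge> 0")
  case True
  have "0 \<le> v * (T - t)" using True t by simp
  then have "value_profile q T t (-x) (-v) = 0"
    using x by (intro value_profile_vanishes(1)[OF q]) auto
  then show ?thesis
    using True t x by (simp add: sym_value_profile_def phi_tilde_eq_value_profile[OF q])
next
  case False
  have "v * (T - t) \<le> 0" using False t by (simp add: mult_nonpos_nonneg)
  then have "value_profile q T t x v = 0"
    using x by (intro value_profile_vanishes(1)[OF q]) auto
  moreover have "phi_tilde q T t x v = ereal (value_profile q T t (-x) (-v))"
    using False t x phi_tilde_uminus[of q T t x v] by (simp add: phi_tilde_eq_value_profile[OF q])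
  ultimately show ?thesis
    by (simp add: sym_value_profile_def)
qed

lemma has_derivative_sym_value_profile:
  assumes q: "q > 1" and t: "t < T" and x: "\<bar>x\<bar> < 1"
  shows "(sym_value_profile q T has_derivative
           (\<lambda>h. sym_value_profile_dt q T (t, x, v) * fst h + sym_value_profile_dx q T (t, x, v) * fst (snd h)
                + sym_value_profile_dv q T (t, x, v) * snd (snd h))) (at (t, x, v))"
  unfolding sym_value_profile_def [abs_def]
  using has_derivative_add[OF has_derivative_value_profile[OF q t] has_derivative_value_profile_reflect[OF q t]] x
  by (auto elim!: has_derivative_eq_rhs simp: sym_value_profile_dt_def sym_value_profile_dx_def
      sym_value_profile_dv_def algebra_simps)

lemma eventually_sym_value_profile_vanishes:
  assumes q: "q > 1" and x0: "\<bar>x0\<bar> < 1"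
  shows "\<forall>\<^sub>F z in nhds (T, x0, v0). fst z \<le> T \<longrightarrow>
           sym_value_profile q T z = 0 \<and> sym_value_profile_dt q T z = 0 \<and>
           sym_value_profile_dx q T z = 0 \<and> sym_value_profile_dv q T z = 0"
proof -
  \<comment> \<open>close to \<open>t = T\<close> the free motion from \<open>(x, v)\<close> and from \<open>(-x, -v)\<close> stays below 1\<close>
  have "open {z. \<bar>snd (snd z)\<bar> * \<bar>T - fst z\<bar> + \<bar>fst (snd z)\<bar> < (1::real)}"
    by (intro open_Collect_less continuous_intros)
  then have "\<forall>\<^sub>F z in nhds (T, x0, v0). \<bar>snd (snd z)\<bar> * \<bar>T - fst z\<bar> + \<bar>fst (snd z)\<bar> < 1"
    using x0 eventually_nhds_in_open by fastforce
  then show ?thesis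
  proof (rule eventually_mono, intro impI)
    fix z :: "real \<times> real \<times> real"
    assume small: "\<bar>snd (snd z)\<bar> * \<bar>T - fst z\<bar> + \<bar>fst (snd z)\<bar> < 1" and t: "fst z \<le> T"
    obtain t x v where z: "z = (t, x, v)" by (cases z)
    have "\<bar>v * (T - t)\<bar> + \<bar>x\<bar> < 1" using small by (simp add: z abs_mult)
    then have "v * (T - t) \<le> 1 - x" "- v * (T - t) \<le> 1 - - x" "x < 1" "- x < 1" by linarith+
    then show "sym_value_profile q T z = 0 \<and> sym_value_profile_dt q T z = 0 \<and>
        sym_value_profile_dx q T z = 0 \<and> sym_value_profile_dv q T z = 0"
      using value_profile_vanishes[OF q, of x v T t] value_profile_vanishes[OF q, of "-x" "-v" T t]
      by (simp add: z sym_value_profile_def sym_value_profile_dt_def sym_value_profile_dx_def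
          sym_value_profile_dv_def)
  qed
qed

lemma sym_value_profile_vanishes_near_T:
  assumes q: "q > 1" and S: "S \<subseteq> {z. fst z \<le> T}" and x0: "\<bar>x0\<bar> < 1"
  shows "\<forall>\<^sub>F z in at (T, x0, v0) within S. sym_value_profile q T z = 0 \<and> sym_value_profile_dt q T z = 0
           \<and> sym_value_profile_dx q T z = 0 \<and> sym_value_profile_dv q T z = 0"
    and "sym_value_profile q T (T, x0, v0) = 0 \<and> sym_value_profile_dt q T (T, x0, v0) = 0
           \<and> sym_value_profile_dx q T (T, x0, v0) = 0 \<and> sym_value_profile_dv q T (T, x0, v0) = 0"
  using eventually_sym_value_profile_vanishes[OF q x0, of T v0] S
  by (auto simp: eventually_at_filter dest: eventually_nhds_x_imp_x elim!: eventually_mono)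

lemma continuous_on_sym_value_profile_grad:
  fixes T :: real
  assumes q: "q > 1"
  defines "S \<equiv> {0..T} \<times> {-1<..<1} \<times> (UNIV :: real set)"
  shows "continuous_on S (sym_value_profile_dt q T)" "continuous_on S (sym_value_profile_dx q T)"
    "continuous_on S (sym_value_profile_dv q T)"
proof -
  define U where "U = {z :: real \<times> real \<times> real. fst z < T \<and> -1 < fst (snd z) \<and> fst (snd z) < 1}"
  have "open U" unfolding U_def by (intro open_Collect_conj open_Collect_less continuous_intros)
  have "continuous_on U (sym_value_profile_dt q T)" "continuous_on U (sym_value_profile_dx q T)"
    "continuous_on U (sym_value_profile_dv q T)"
    unfolding sym_value_profile_dt_def sym_value_profile_dx_def sym_value_profile_dv_def
      value_profile_dt_def value_profile_dx_def value_profile_dv_def U_def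
    using q by (auto intro!: continuous_intros)
  note cont_U = this[unfolded continuous_on_eq_continuous_at[OF \<open>open U\<close>]]
  have "continuous (at z within S) D"
    if z: "z \<in> S" and D: "D \<in> {sym_value_profile_dt q T, sym_value_profile_dx q T, sym_value_profile_dv q T}"
    for z D
  proof (cases "fst z = T")
    case True
    obtain x0 v0 where z0: "z = (T, x0, v0)" and x0: "\<bar>x0\<bar> < 1"
      using z True by (cases z) (auto simp: S_def)
    have "S \<subseteq> {z. fst z \<le> T}" by (auto simp: S_def)
    from sym_value_profile_vanishes_near_T[OF q this x0, of v0] show ?thesis
      using D by (auto simp: z0 continuous_within elim!: tendsto_eventually[OF eventually_mono])
  next
    case False
    then have "z \<in> U" using z by (auto simp: S_def U_def)
    then have "isCont D z"
      using cont_U D by auto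
    then show ?thesis by (rule continuous_at_imp_continuous_at_within)
  qed
  then show "continuous_on S (sym_value_profile_dt q T)" "continuous_on S (sym_value_profile_dx q T)"
    "continuous_on S (sym_value_profile_dv q T)"
    by (auto simp: continuous_on_eq_continuous_within)
qed

lemma has_derivative_sym_value_profile_within:
  fixes T :: real
  assumes q: "q > 1"
  defines "S \<equiv> {0..T} \<times> {-1<..<1} \<times> (UNIV :: real set)"
  assumes z: "z \<in> S"
  shows "(sym_value_profile q T has_derivative
           (\<lambda>h. sym_value_profile_dt q T z * fst h + sym_value_profile_dx q T z * fst (snd h)
                + sym_value_profile_dv q T z * snd (snd h))) (at z within S)"
proof (cases "fst z = T")
  case True
  obtain x0 v0 where z0: "z = (T, x0, v0)" and x0: "\<bar>x0\<bar> < 1"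
    using z True by (cases z) (auto simp: S_def)
  have "S \<subseteq> {z. fst z \<le> T}" by (auto simp: S_def)
  note vanish = sym_value_profile_vanishes_near_T[OF q this x0, of v0]
  have "(sym_value_profile q T has_derivative (\<lambda>h. 0)) (at z within S)"
    using vanish z by (intro has_derivative_transform_eventually[OF has_derivative_const[of 0]])
      (auto simp: z0 elim!: eventually_mono)
  then show ?thesis
    using vanish by (simp add: z0)
next
  case False
  obtain t x v where z0: "z = (t, x, v)" by (cases z)
  then have "t < T" "\<bar>x\<bar> < 1" using z False by (auto simp: S_def)
  then show ?thesis
    unfolding z0 by (rule has_derivative_at_withinI[OF has_derivative_sym_value_profile[OF q]])
qed

lemma phi_tilde_C1:
  fixes q T :: real
  assumes q: "q > 1"
  shows "let S = {0..T} \<times> {-1<..<1} \<times> (UNIV :: real set);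
         \<Phi> = (\<lambda>z. real_of_ereal (phi_tilde q T (fst z) (fst (snd z)) (snd (snd z))))
     in (\<forall>z\<in>S. \<bar>phi_tilde q T (fst z) (fst (snd z)) (snd (snd z))\<bar> \<noteq> \<infinity>) \<and>
        (\<exists>Dt Dx Dv :: real \<times> real \<times> real \<Rightarrow> real.
           continuous_on S Dt \<and> continuous_on S Dx \<and> continuous_on S Dv \<and>
           (\<forall>z\<in>S. (\<Phi> has_derivative
                (\<lambda>h. Dt z * fst h + Dx z * fst (snd h) + Dv z * snd (snd h))) (at z within S)))"
proof -
  define S where "S = {0..T} \<times> {-1<..<1::real} \<times> (UNIV :: real set)"
  define \<Phi> where "\<Phi> = (\<lambda>z. real_of_ereal (phi_tilde q T (fst z) (fst (snd z)) (snd (snd z))))"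
  have phi_eq: "phi_tilde q T (fst z) (fst (snd z)) (snd (snd z)) = ereal (sym_value_profile q T z)"
    if "z \<in> S" for z :: "real \<times> real \<times> real"
    using that phi_tilde_eq_sym_value_profile[OF q] by (auto simp: S_def)
  have "(\<Phi> has_derivative (\<lambda>h. sym_value_profile_dt q T z * fst h + sym_value_profile_dx q T z * fst (snd h)
      + sym_value_profile_dv q T z * snd (snd h))) (at z within S)" if "z \<in> S" for z
  proof -
    have "(sym_value_profile q T has_derivative (\<lambda>h. sym_value_profile_dt q T z * fst h
        + sym_value_profile_dx q T z * fst (snd h) + sym_value_profile_dv q T z * snd (snd h))) (at z within S)"
      using has_derivative_sym_value_profile_within[OF q, of z T] that by (simp add: S_def)
    then show ?thesis
      by (rule has_derivative_transform_within[OF _ zero_less_one that]) (simp add: \<Phi>_def phi_eq)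
  qed
  moreover have "continuous_on S (sym_value_profile_dt q T)" "continuous_on S (sym_value_profile_dx q T)"
    "continuous_on S (sym_value_profile_dv q T)"
    using continuous_on_sym_value_profile_grad[OF q, of T] by (simp_all add: S_def)
  moreover have "\<forall>z\<in>S. \<bar>phi_tilde q T (fst z) (fst (snd z)) (snd (snd z))\<bar> \<noteq> \<infinity>"
    using phi_eq by simp
  ultimately show ?thesis
    unfolding Let_def S_def[symmetric] \<Phi>_def[symmetric] by blast
qed

lemma hjb_within_if_phi_tilde_eq:
  assumes zD: "(t, x, v) \<in> D"
    and phi: "\<And>t' x' v'. (t', x', v') \<in> D \<Longrightarrow> phi_tilde q T t' x' v' = ereal (f (t', x', v'))"
    and f: "(f has_derivative (\<lambda>h. dt * fst h + dx * fst (snd h) + dv * snd (snd h))) (at (t, x, v))"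
    and eq: "- dt - v * dx + (1/p) * \<bar>dv\<bar> powr p = 0"
  shows "\<bar>phi_tilde q T t x v\<bar> \<noteq> \<infinity> \<and>
      (\<exists>dt dx dv :: real.
         ((\<lambda>z. real_of_ereal (phi_tilde q T (fst z) (fst (snd z)) (snd (snd z)))) has_derivative
            (\<lambda>h. dt * fst h + dx * fst (snd h) + dv * snd (snd h))) (at (t, x, v) within D) \<and>
         - dt - v * dx + (1/p) * \<bar>dv\<bar> powr p = 0)"
proof (intro conjI exI)
  show "\<bar>phi_tilde q T t x v\<bar> \<noteq> \<infinity>" using phi zD by simp
  show "((\<lambda>z. real_of_ereal (phi_tilde q T (fst z) (fst (snd z)) (snd (snd z)))) has_derivative
      (\<lambda>h. dt * fst h + dx * fst (snd h) + dv * snd (snd h))) (at (t, x, v) within D)"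
    using zD phi
    by (intro has_derivative_transform_within[OF has_derivative_at_withinI[OF f] zero_less_one]) auto
qed (rule eq)

lemma phi_tilde_hjb:
  fixes q T p :: real
  assumes q: "q > 1" and p: "p = q / (q - 1)"
  shows "\<forall>D \<in> {{0..<T} \<times> {-1..<1} \<times> {0..}, {0..<T} \<times> {-1<..1} \<times> {..0}}.
       let \<Phi> = (\<lambda>z. real_of_ereal (phi_tilde q T (fst z) (fst (snd z)) (snd (snd z))))
       in \<forall>z\<in>D. \<bar>phi_tilde q T (fst z) (fst (snd z)) (snd (snd z))\<bar> \<noteq> \<infinity> \<and>
            (\<exists>dt dx dv :: real.
               (\<Phi> has_derivative (\<lambda>h. dt * fst h + dx * fst (snd h) + dv * snd (snd h))) (at z within D) \<and>
               - dt - snd (snd z) * dx + (1/p) * \<bar>dv\<bar> powr p = 0)"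
  unfolding Let_def
proof (intro ballI)
  fix D and z :: "real \<times> real \<times> real"
  assume "D \<in> {{0..<T} \<times> {-1..<1} \<times> {0..}, {0..<T} \<times> {-1<..1} \<times> {..0}}" and zD: "z \<in> D"
  obtain t x v where z: "z = (t, x, v)" by (cases z)
  from \<open>D \<in> _\<close> consider "D = {0..<T} \<times> {-1..<1} \<times> {0..}" | "D = {0..<T} \<times> {-1<..1} \<times> {..0}"
    by blast
  then show "\<bar>phi_tilde q T (fst z) (fst (snd z)) (snd (snd z))\<bar> \<noteq> \<infinity> \<and>
      (\<exists>dt dx dv :: real.
         ((\<lambda>z. real_of_ereal (phi_tilde q T (fst z) (fst (snd z)) (snd (snd z)))) has_derivative
            (\<lambda>h. dt * fst h + dx * fst (snd h) + dv * snd (snd h))) (at z within D) \<and>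
         - dt - snd (snd z) * dx + (1/p) * \<bar>dv\<bar> powr p = 0)"
  proof cases
    case 1
    have t: "t < T" and x: "x < 1" using zD by (auto simp: 1 z)
    show ?thesis
      using hjb_within_if_phi_tilde_eq[OF zD[unfolded z] _ has_derivative_value_profile[OF q t x]
          value_profile_hjb[OF q p t x]]
      by (auto simp: z 1 phi_tilde_eq_value_profile[OF q])
  next
    case 2
    have t: "t < T" and x: "-1 < x" using zD by (auto simp: 2 z)
    have phi: "phi_tilde q T t' x' v' = ereal (value_profile q T (fst (t', x', v'))
        (- fst (snd (t', x', v'))) (- snd (snd (t', x', v'))))"
      if "(t', x', v') \<in> D" for t' x' v'
      using that phi_tilde_uminus[of q T t' x' v'] by (auto simp: 2 phi_tilde_eq_value_profile[OF q])
    have der: "((\<lambda>z. value_profile q T (fst z) (- fst (snd z)) (- snd (snd z))) has_derivative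
        (\<lambda>h. value_profile_dt q T t (-x) (-v) * fst h + (- value_profile_dx q T t (-x) (-v)) * fst (snd h)
           + (- value_profile_dv q T t (-x) (-v)) * snd (snd h))) (at (t, x, v))"
      using has_derivative_value_profile_reflect[OF q t x, of v] by simp
    have "- value_profile_dt q T t (-x) (-v) - v * (- value_profile_dx q T t (-x) (-v))
        + (1/p) * \<bar>- value_profile_dv q T t (-x) (-v)\<bar> powr p = 0"
      using value_profile_hjb[OF q p t, of "-x" "-v"] x by simp
    then show ?thesis
      using hjb_within_if_phi_tilde_eq[OF zD[unfolded z] phi der] by (simp add: z)
  qed
qed
theorem corollary2p8:
  fixes q T p :: real
  assumes hq: "q > 1" and hT: "T > 0" and hp: "p = q / (q - 1)"
  shows
   "(\<forall>t\<in>{0..T}. \<forall>x\<in>{-1..1}. \<forall>v.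
      (v * (T - t) \<le> - ((2*q-1)/(q-1)) * (1 + x) \<and> - ((2*q-1)/(q-1)) * (1 + x) < 0 \<longrightarrow>
         phi_tilde q T t x v =
           ereal (q powr (q-1) / (2*q-1) powr q * (\<bar>v\<bar> powr (2*q-1) / (1 + x) powr (q-1)))) \<and>
      (- ((2*q-1)/(q-1)) * (1 + x) \<le> v * (T - t) \<and> v * (T - t) \<le> - (1 + x) \<longrightarrow>
         phi_tilde q T t x v =
           ereal ((1/q) * ((2*q-1) powr (q-1) / (q-1) powr (q-1)) *
                  (\<bar>v + (1 + x) / (T - t)\<bar> powr q / (T - t) powr (q-1)))) \<and>
      (-1 - x \<le> v * (T - t) \<and> v * (T - t) \<le> 1 - x \<longrightarrow>
         phi_tilde q T t x v = 0) \<and>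
      (1 - x \<le> v * (T - t) \<and> v * (T - t) \<le> ((2*q-1)/(q-1)) * (1 - x) \<longrightarrow>
         phi_tilde q T t x v =
           ereal ((1/q) * ((2*q-1) powr (q-1) / (q-1) powr (q-1)) *
                  ((v + (x - 1) / (T - t)) powr q / (T - t) powr (q-1)))) \<and>
      (v * (T - t) \<ge> ((2*q-1)/(q-1)) * (1 - x) \<and> ((2*q-1)/(q-1)) * (1 - x) > 0 \<longrightarrow>
         phi_tilde q T t x v =
           ereal (q powr (q-1) / (2*q-1) powr q * (v powr (2*q-1) / (1 - x) powr (q-1)))))
    \<and>
    (let S = {0..T} \<times> {-1<..<1} \<times> (UNIV :: real set);
         \<Phi> = (\<lambda>z. real_of_ereal (phi_tilde q T (fst z) (fst (snd z)) (snd (snd z))))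
     in (\<forall>z\<in>S. \<bar>phi_tilde q T (fst z) (fst (snd z)) (snd (snd z))\<bar> \<noteq> \<infinity>) \<and>
        (\<exists>Dt Dx Dv :: real \<times> real \<times> real \<Rightarrow> real.
           continuous_on S Dt \<and> continuous_on S Dx \<and> continuous_on S Dv \<and>
           (\<forall>z\<in>S. (\<Phi> has_derivative
                (\<lambda>h. Dt z * fst h + Dx z * fst (snd h) + Dv z * snd (snd h))) (at z within S))))
    \<and>
    (\<forall>D \<in> {{0..<T} \<times> {-1..<1} \<times> {0..}, {0..<T} \<times> {-1<..1} \<times> {..0}}.
       let \<Phi> = (\<lambda>z. real_of_ereal (phi_tilde q T (fst z) (fst (snd z)) (snd (snd z))))
       in \<forall>z\<in>D. \<bar>phi_tilde q T (fst z) (fst (snd z)) (snd (snd z))\<bar> \<noteq> \<infinity> \<and>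
            (\<exists>dt dx dv :: real.
               (\<Phi> has_derivative (\<lambda>h. dt * fst h + dx * fst (snd h) + dv * snd (snd h))) (at z within D) \<and>
               - dt - snd (snd z) * dx + (1/p) * \<bar>dv\<bar> powr p = 0))"
  by (intro conjI phi_tilde_explicit[OF hq] phi_tilde_C1[OF hq] phi_tilde_hjb[OF hq hp])

end
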